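(* Let $\mathscr T=(V,\mathcal E)$ be the directed Cartesian product of locally finite rooted directed trees $\mathscr T_1,\dots,\mathscr T_d$, let $a>0$, and let $S_{\boldsymbol\lambda_{\mathfrak C_a}}=(S_1,\dots,S_d)$ be the multishift on $\mathscr T$ with weights $$\lambda^{(j)}_w=\frac{1}{\sqrt{\mathrm{card}(\mathsf{Chi}_j(v))}}\sqrt{\frac{\alpha_{v_j}+1}{|\alpha_v|+a}}\qquad(w\in\mathsf{Chi}_j(v),\ v\in V,\ j=1,\dots,d).$$ If $\mathscr T$ has finite joint branching index, then $S_{\boldsymbol\lambda_{\mathfrak C_a}}$ is essentially normal, i.e. $S_i^*S_j-S_jS_i^*$ is compact for all $i,j=1,\dots,d$.
   Context: Directed trees: no loops or circuits, connected ignoring orientation, unique parent $\mathsf{par}(v)$ for vertices with incoming edges; rooted: unique parentless vertex $\mathsf{root}$; $\mathsf{Chi}(u)=\{v:(u,v)\in\mathcal E\}$; locally finite: all $\mathsf{Chi}(u)$ finite; all leafless. Depth of $u$: $n$ with $u\in\mathsf{Chi}^n(\mathsf{root})$. Branching index of $\mathscr T_j$: $1+\sup\{\text{depth}(w):\mathrm{card}\,\mathsf{Chi}(w)\ge2\}$, or $0$ if no such $w$; finite joint branching index means every $\mathscr T_j$ has finite branching index. Directed Cartesian product: $V=V_1\times\dots\times V_d$ (countably infinite), $(v,w)\in\mathcal E$ iff for some $k$, $(v_k,w_k)\in\mathcal E_k$ and $w_j=v_j$ ($j\ne k$). $\mathsf{Chi}_j(v)=\{w:w_j\in\mathsf{Chi}(v_j),w_k=v_k\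 (k\ne j)\}$. Depth $\alpha_v=(\alpha_{v_1},\dots,\alpha_{v_d})$, $\alpha_{v_j}$ the depth of $v_j$ in $\mathscr T_j$, $|\alpha_v|=\sum_j\alpha_{v_j}$. The multishift acts by $S_je_v=\sum_{w\in\mathsf{Chi}_j(v)}\lambda^{(j)}_we_w$ on $l^2(V)$. *)

theory Defs
  imports "HOL-Analysis.Analysis" "HOL-Library.Extended_Nat"
begin

definition tree_edges :: "'a set \<Rightarrow> ('a \<Rightarrow> 'a set) \<Rightarrow> ('a \<times> 'a) set" where
  "tree_edges V chi = {(u, v). u \<in> V \<and> v \<in> chi u}"

definition rooted_directed_tree :: "'a set \<Rightarrow> ('a \<Rightarrow> 'a set) \<Rightarrow> bool" where
  "rooted_directed_tree V chi \<longleftrightarrow>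
     (\<forall>u\<in>V. chi u \<subseteq> V) \<and>
     (\<forall>u\<in>V. (u, u) \<notin> (tree_edges V chi)\<^sup>+) \<and>
     (\<forall>u\<in>V. \<forall>v\<in>V. (u, v) \<in> (tree_edges V chi \<union> (tree_edges V chi)\<inverse>)\<^sup>*) \<and>
     (\<forall>u1 u2 v. (u1, v) \<in> tree_edges V chi \<longrightarrow> (u2, v) \<in> tree_edges V chi \<longrightarrow> u1 = u2) \<and>
     (\<exists>!r. r \<in> V \<and> \<not> (\<exists>u. (u, r) \<in> tree_edges V chi))"

definition locally_finite_tree :: "'a set \<Rightarrow> ('a \<Rightarrow> 'a set) \<Rightarrow> bool" where
  "locally_finite_tree V chi \<longleftrightarrow> (\<forall>u\<in>V. finite (chi u))"

definition leafless_tree :: "'a set \<Rightarrow> ('a \<Rightarrow> 'a set) \<Rightarrow> bool" where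
  "leafless_tree V chi \<longleftrightarrow> (\<forall>u\<in>V. chi u \<noteq> {})"

definition tree_root :: "'a set \<Rightarrow> ('a \<Rightarrow> 'a set) \<Rightarrow> 'a" where
  "tree_root V chi = (THE r. r \<in> V \<and> \<not> (\<exists>u. (u, r) \<in> tree_edges V chi))"

primrec chi_pow :: "('a \<Rightarrow> 'a set) \<Rightarrow> nat \<Rightarrow> 'a set \<Rightarrow> 'a set" where
  "chi_pow chi 0 A = A"
| "chi_pow chi (Suc n) A = (\<Union>u\<in>chi_pow chi n A. chi u)"

definition tree_depth :: "'a set \<Rightarrow> ('a \<Rightarrow> 'a set) \<Rightarrow> 'a \<Rightarrow> nat" where
  "tree_depth V chi u = (LEAST n. u \<in> chi_pow chi n {tree_root V chi})"

definition branching_index :: "'a set \<Rightarrow> ('a \<Rightarrow> 'a set) \<Rightarrow> enat" where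
  "branching_index V chi =
     (let W = {w \<in> V. card (chi w) \<ge> 2}
      in if W = {} then 0 else 1 + (SUP w\<in>W. enat (tree_depth V chi w)))"

definition prod_V :: "nat \<Rightarrow> (nat \<Rightarrow> 'a set) \<Rightarrow> (nat \<Rightarrow> 'a) set" where
  "prod_V d Vt = PiE {..<d} Vt"

definition prod_Chi ::
  "nat \<Rightarrow> (nat \<Rightarrow> 'a set) \<Rightarrow> (nat \<Rightarrow> 'a \<Rightarrow> 'a set) \<Rightarrow> nat \<Rightarrow> (nat \<Rightarrow> 'a) \<Rightarrow> (nat \<Rightarrow> 'a) set" where
  "prod_Chi d Vt ch j v = {w \<in> prod_V d Vt. w j \<in> ch j (v j) \<and> (\<forall>k. k \<noteq> j \<longrightarrow> w k = v k)}"

definition alpha :: "(nat \<Rightarrow> 'a set) \<Rightarrow> (nat \<Rightarrow> 'a \<Rightarrow> 'a set) \<Rightarrow> (nat \<Rightarrow> 'a) \<Rightarrow> nat \<Rightarrow> nat" where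
  "alpha Vt ch v j = tree_depth (Vt j) (ch j) (v j)"

definition alpha_abs :: "nat \<Rightarrow> (nat \<Rightarrow> 'a set) \<Rightarrow> (nat \<Rightarrow> 'a \<Rightarrow> 'a set) \<Rightarrow> (nat \<Rightarrow> 'a) \<Rightarrow> nat" where
  "alpha_abs d Vt ch v = (\<Sum>j<d. alpha Vt ch v j)"

text \<open>The weight lambda^(j)_w for w in Chi_j(v) (it depends on the parent v).\<close>
definition weight_Ca ::
  "nat \<Rightarrow> (nat \<Rightarrow> 'a set) \<Rightarrow> (nat \<Rightarrow> 'a \<Rightarrow> 'a set) \<Rightarrow> real \<Rightarrow> nat \<Rightarrow> (nat \<Rightarrow> 'a) \<Rightarrow> complex" where
  "weight_Ca d Vt ch a j v =
     complex_of_real (1 / sqrt (real (card (prod_Chi d Vt ch j v)))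
       * sqrt ((real (alpha Vt ch v j) + 1) / (real (alpha_abs d Vt ch v) + a)))"

definition ell2 :: "'v set \<Rightarrow> ('v \<Rightarrow> complex) set" where
  "ell2 V = {f. (\<forall>x. x \<notin> V \<longrightarrow> f x = 0) \<and> (\<lambda>x. (cmod (f x))\<^sup>2) summable_on V}"

definition ell2_norm :: "'v set \<Rightarrow> ('v \<Rightarrow> complex) \<Rightarrow> real" where
  "ell2_norm V f = sqrt (\<Sum>\<^sub>\<infinity>x\<in>V. (cmod (f x))\<^sup>2)"

definition ell2_inner :: "'v set \<Rightarrow> ('v \<Rightarrow> complex) \<Rightarrow> ('v \<Rightarrow> complex) \<Rightarrow> complex" where
  "ell2_inner V f g = (\<Sum>\<^sub>\<infinity>x\<in>V. cnj (f x) * g x)"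

definition linear_op :: "'v set \<Rightarrow> (('v \<Rightarrow> complex) \<Rightarrow> ('v \<Rightarrow> complex)) \<Rightarrow> bool" where
  "linear_op V T \<longleftrightarrow> (\<forall>f\<in>ell2 V. T f \<in> ell2 V) \<and>
     (\<forall>c. \<forall>f\<in>ell2 V. \<forall>g\<in>ell2 V. T (\<lambda>x. c * f x + g x) = (\<lambda>x. c * T f x + T g x))"

definition bounded_op :: "'v set \<Rightarrow> (('v \<Rightarrow> complex) \<Rightarrow> ('v \<Rightarrow> complex)) \<Rightarrow> bool" where
  "bounded_op V T \<longleftrightarrow> linear_op V T \<and>
     (\<exists>C. \<forall>f\<in>ell2 V. ell2_norm V (T f) \<le> C * ell2_norm V f)"

definition is_adjoint :: "'v set \<Rightarrow> (('v \<Rightarrow> complex) \<Rightarrow> ('v \<Rightarrow> complex))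
     \<Rightarrow> (('v \<Rightarrow> complex) \<Rightarrow> ('v \<Rightarrow> complex)) \<Rightarrow> bool" where
  "is_adjoint V T T' \<longleftrightarrow> (\<forall>g\<in>ell2 V. T' g \<in> ell2 V) \<and>
     (\<forall>f\<in>ell2 V. \<forall>g\<in>ell2 V. ell2_inner V (T f) g = ell2_inner V f (T' g))"

definition compact_operator_ell2 :: "'v set \<Rightarrow> (('v \<Rightarrow> complex) \<Rightarrow> ('v \<Rightarrow> complex)) \<Rightarrow> bool" where
  "compact_operator_ell2 V T \<longleftrightarrow> linear_op V T \<and>
     (\<forall>(f :: nat \<Rightarrow> 'v \<Rightarrow> complex) (B::real). (\<forall>n. f n \<in> ell2 V \<and> ell2_norm V (f n) \<le> B) \<longrightarrow>
        (\<exists>(r :: nat \<Rightarrow> nat) g. strict_mono r \<and> g \<in> ell2 V \<and>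
           (\<lambda>n. ell2_norm V (\<lambda>x. T (f (r n)) x - g x)) \<longlonglongrightarrow> 0))"

text \<open>The multishift S_j: S_j e_v = sum_{w in Chi_j(v)} lambda_w e_w, extended linearly:
  (S_j f)(w) = sum over v with w in Chi_j(v) of lambda^(j)_w f(v).\<close>
definition multishift ::
  "nat \<Rightarrow> (nat \<Rightarrow> 'a set) \<Rightarrow> (nat \<Rightarrow> 'a \<Rightarrow> 'a set)
     \<Rightarrow> (nat \<Rightarrow> (nat \<Rightarrow> 'a) \<Rightarrow> complex) \<Rightarrow> nat
     \<Rightarrow> ((nat \<Rightarrow> 'a) \<Rightarrow> complex) \<Rightarrow> ((nat \<Rightarrow> 'a) \<Rightarrow> complex)" where
  "multishift d Vt ch lam j f = (\<lambda>w. if w \<in> prod_V d Vt then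
       (\<Sum>\<^sub>\<infinity>v\<in>{v \<in> prod_V d Vt. w \<in> prod_Chi d Vt ch j v}. lam j v * f v) else 0)"

end

theory Submission
  imports Defs "HOL-Library.Diagonal_Subsequence"
begin

text \<open>The multishift \<open>S\<^sub>j\<close> moves the value at the \<open>j\<close>-parent of a vertex to the vertex,
  weighted by \<open>\<lambda>\<^sub>j\<close> of the parent. As \<open>card Chi\<^sub>j(v) \<lambda>\<^sub>j(v)\<^sup>2 = (\<alpha>\<^sub>j + 1) / (|\<alpha>| + a) \<le> 1 + 1/a\<close>,
  \<open>S\<^sub>j\<close> is bounded, with \<open>(S\<^sub>j\<^sup>* g)(v) = \<lambda>\<^sub>j(v) \<Sum>\<^bsub>w \<in> Chi\<^sub>j(v)\<^esub> g(w)\<close>.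

  The value of \<open>(S\<^sub>i\<^sup>* S\<^sub>j - S\<^sub>j S\<^sub>i\<^sup>*) f\<close> at \<open>x\<close> is a combination of the values of \<open>f\<close> at \<open>x\<close> and at
  the \<open>i\<close>-children of the \<open>j\<close>-parent of \<open>x\<close>, all on the level \<open>|\<alpha>\<^sub>x|\<close>, with coefficients
  \<open>O(1 / |\<alpha>\<^sub>x|)\<close>: for \<open>i \<noteq> j\<close> they are differences of one square root evaluated at the levels
  \<open>|\<alpha>\<^sub>x|\<close> and \<open>|\<alpha>\<^sub>x| - 1\<close>; for \<open>i = j\<close> the coefficient is \<open>\<mu>\<^sub>j(x) - \<mu>\<^sub>j(par x)\<close> when \<open>x\<close> is an
  only child, and otherwise \<open>\<alpha>\<^sub>j(x)\<close> is bounded by the branching index. A finite branching index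
  also bounds the number of children, so these neighbourhoods have bounded size.

  Such an operator is compact: every level is finite, so a bounded sequence has a pointwise
  convergent subsequence, and the operator turns it into a norm convergent one, being uniformly
  small on functions supported on high levels.\<close>

lemma ell2_summable: "f \<in> ell2 V \<Longrightarrow> (\<lambda>x. (cmod (f x))\<^sup>2) summable_on V"
  by (simp add: ell2_def)

lemma ell2_norm_nonneg: "ell2_norm V f \<ge> 0"
  by (simp add: ell2_norm_def infsum_nonneg)

lemma ell2I_finite_sums:
  assumes out: "\<And>x. x \<notin> V \<Longrightarrow> f x = 0" and C: "C \<ge> 0"
    and fin: "\<And>F. finite F \<Longrightarrow> F \<subseteq> V \<Longrightarrow> (\<Sum>x\<in>F. (cmod (f x))\<^sup>2) \<le> C\<^sup>2"
  shows "f \<in> ell2 V \<and> ell2_norm V f \<le> C"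
proof -
  have sm: "(\<lambda>x. (cmod (f x))\<^sup>2) summable_on V"
    by (rule nonneg_bdd_above_summable_on) (auto intro!: bdd_aboveI2 fin)
  have "(\<Sum>\<^sub>\<infinity>x\<in>V. (cmod (f x))\<^sup>2) \<le> C\<^sup>2"
    by (rule infsum_le_finite_sums[OF sm]) (use fin in auto)
  then have "ell2_norm V f \<le> sqrt (C\<^sup>2)" unfolding ell2_norm_def by (rule real_sqrt_le_mono)
  with C sm out show ?thesis by (simp add: ell2_def)
qed

lemma ell2_finite_sum_le:
  assumes "f \<in> ell2 V" "finite F" "F \<subseteq> V"
  shows "(\<Sum>x\<in>F. (cmod (f x))\<^sup>2) \<le> (ell2_norm V f)\<^sup>2"
proof -
  have "(\<Sum>x\<in>F. (cmod (f x))\<^sup>2) \<le> (\<Sum>\<^sub>\<infinity>x\<in>V. (cmod (f x))\<^sup>2)"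
    by (rule finite_sum_le_infsum) (use assms in \<open>auto simp: ell2_def\<close>)
  then show ?thesis by (simp add: ell2_norm_def infsum_nonneg)
qed

lemma ell2_L2_set_le:
  assumes "f \<in> ell2 V" "finite F" "F \<subseteq> V"
  shows "L2_set (\<lambda>x. cmod (f x)) F \<le> ell2_norm V f"
proof -
  have "L2_set (\<lambda>x. cmod (f x)) F \<le> sqrt ((ell2_norm V f)\<^sup>2)"
    unfolding L2_set_def by (rule real_sqrt_le_mono) (rule ell2_finite_sum_le[OF assms])
  then show ?thesis by (simp add: ell2_norm_nonneg)
qed

lemma ell2_norm_ge_point:
  assumes "f \<in> ell2 V" "x \<in> V"
  shows "cmod (f x) \<le> ell2_norm V f"
  using ell2_L2_set_le[OF assms(1), of "{x}"] assms(2) by (simp add: L2_set_def)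

lemma ell2I_L2_set:
  assumes out: "\<And>x. x \<notin> V \<Longrightarrow> f x = 0" and C: "C \<ge> 0"
    and fin: "\<And>F. finite F \<Longrightarrow> F \<subseteq> V \<Longrightarrow> L2_set (\<lambda>x. cmod (f x)) F \<le> C"
  shows "f \<in> ell2 V \<and> ell2_norm V f \<le> C"
proof (rule ell2I_finite_sums[OF out C])
  fix F assume F: "finite F" "F \<subseteq> V"
  have "(\<Sum>x\<in>F. (cmod (f x))\<^sup>2) = (L2_set (\<lambda>x. cmod (f x)) F)\<^sup>2"
    by (simp add: L2_set_def sum_nonneg)
  also have "\<dots> \<le> C\<^sup>2"
    using fin[OF F] L2_set_nonneg[of "\<lambda>x. cmod (f x)" F] by (intro power_mono) auto
  finally show "(\<Sum>x\<in>F. (cmod (f x))\<^sup>2) \<le> C\<^sup>2" .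
qed

lemma ell2_add:
  assumes "f \<in> ell2 V" "g \<in> ell2 V"
  shows "(\<lambda>x. f x + g x) \<in> ell2 V \<and> ell2_norm V (\<lambda>x. f x + g x) \<le> ell2_norm V f + ell2_norm V g"
proof (rule ell2I_L2_set)
  show "\<And>x. x \<notin> V \<Longrightarrow> f x + g x = 0" using assms by (simp add: ell2_def)
  show "0 \<le> ell2_norm V f + ell2_norm V g" by (simp add: ell2_norm_nonneg add_nonneg_nonneg)
  fix F assume F: "finite F" "F \<subseteq> V"
  have "L2_set (\<lambda>x. cmod (f x + g x)) F \<le> L2_set (\<lambda>x. cmod (f x) + cmod (g x)) F"
    by (rule L2_set_mono) (auto simp: norm_triangle_ineq)
  also have "\<dots> \<le> L2_set (\<lambda>x. cmod (f x)) F + L2_set (\<lambda>x. cmod (g x)) F"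
    by (rule L2_set_triangle_ineq)
  also have "\<dots> \<le> ell2_norm V f + ell2_norm V g"
    using ell2_L2_set_le[OF assms(1) F] ell2_L2_set_le[OF assms(2) F] by simp
  finally show "L2_set (\<lambda>x. cmod (f x + g x)) F \<le> ell2_norm V f + ell2_norm V g" .
qed

lemma ell2_scale:
  assumes "f \<in> ell2 V"
  shows "(\<lambda>x. c * f x) \<in> ell2 V \<and> ell2_norm V (\<lambda>x. c * f x) \<le> cmod c * ell2_norm V f"
proof (rule ell2I_L2_set)
  show "\<And>x. x \<notin> V \<Longrightarrow> c * f x = 0" using assms by (simp add: ell2_def)
  show "0 \<le> cmod c * ell2_norm V f" by (simp add: ell2_norm_nonneg)
  fix F assume F: "finite F" "F \<subseteq> V"
  have "L2_set (\<lambda>x. cmod (c * f x)) F = cmod c * L2_set (\<lambda>x. cmod (f x)) F"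
    by (simp add: norm_mult L2_set_right_distrib)
  also have "\<dots> \<le> cmod c * ell2_norm V f"
    using ell2_L2_set_le[OF assms F] by (simp add: mult_left_mono)
  finally show "L2_set (\<lambda>x. cmod (c * f x)) F \<le> cmod c * ell2_norm V f" .
qed

lemma ell2_diff:
  assumes "f \<in> ell2 V" "g \<in> ell2 V"
  shows "(\<lambda>x. f x - g x) \<in> ell2 V \<and> ell2_norm V (\<lambda>x. f x - g x) \<le> ell2_norm V f + ell2_norm V g"
proof -
  have m: "(\<lambda>x. (-1) * g x) \<in> ell2 V \<and> ell2_norm V (\<lambda>x. (-1) * g x) \<le> ell2_norm V g"
    using ell2_scale[OF assms(2), of "-1"] by simp
  then show ?thesis using ell2_add[OF assms(1) conjunct1[OF m]] by simp
qed

lemma ell2_restrict: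
  assumes "f \<in> ell2 V"
  shows "(\<lambda>x. if x \<in> A then f x else 0) \<in> ell2 V \<and>
    ell2_norm V (\<lambda>x. if x \<in> A then f x else 0) \<le> ell2_norm V f"
proof (rule ell2I_L2_set)
  show "\<And>x. x \<notin> V \<Longrightarrow> (if x \<in> A then f x else 0) = 0" using assms by (simp add: ell2_def)
  show "0 \<le> ell2_norm V f" by (simp add: ell2_norm_nonneg)
  fix F assume F: "finite F" "F \<subseteq> V"
  have "L2_set (\<lambda>x. cmod (if x \<in> A then f x else 0)) F \<le> L2_set (\<lambda>x. cmod (f x)) F"
    by (rule L2_set_mono) auto
  also have "\<dots> \<le> ell2_norm V f" using ell2_L2_set_le[OF assms F] .
  finally show "L2_set (\<lambda>x. cmod (if x \<in> A then f x else 0)) F \<le> ell2_norm V f" .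
qed

lemma ell2_finite_support:
  assumes "finite A" "A \<subseteq> V" "\<And>x. x \<notin> A \<Longrightarrow> f x = 0"
  shows "f \<in> ell2 V"
proof -
  have "(\<lambda>x. (cmod (f x))\<^sup>2) summable_on A"
    using assms(1) by (rule summable_on_finite)
  then have "(\<lambda>x. (cmod (f x))\<^sup>2) summable_on V"
    by (rule summable_on_cong_neutral[THEN iffD1, rotated 3]) (use assms in auto)
  then show ?thesis using assms by (auto simp: ell2_def)
qed

lemma ell2_zero: "(\<lambda>x. 0) \<in> ell2 V"
  by (rule ell2_finite_support[of "{}"]) auto

lemma ell2_sum:
  assumes "finite A" "\<And>v. v \<in> A \<Longrightarrow> g v \<in> ell2 V"
  shows "(\<lambda>y. \<Sum>v\<in>A. g v y) \<in> ell2 V \<and>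
    ell2_norm V (\<lambda>y. \<Sum>v\<in>A. g v y) \<le> (\<Sum>v\<in>A. ell2_norm V (g v))"
  using assms
proof (induction A rule: finite_induct)
  case empty
  then show ?case using ell2_zero[of V] by (simp add: ell2_norm_def)
next
  case (insert v A)
  then show ?case using ell2_add[of "g v" V "\<lambda>y. \<Sum>v\<in>A. g v y"] by fastforce
qed

lemma ell2_inner_summable:
  assumes "f \<in> ell2 V" "g \<in> ell2 V"
  shows "(\<lambda>x. cnj (f x) * g x) summable_on V"
proof -
  have s: "(\<lambda>x. ((cmod (f x))\<^sup>2 + (cmod (g x))\<^sup>2) / 2) summable_on V"
    using summable_on_cmult_left[OF summable_on_add[OF ell2_summable[OF assms(1)]
          ell2_summable[OF assms(2)]], of "1/2"]
    by simp
  have "(\<lambda>x. norm (cnj (f x) * g x)) summable_on V"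
  proof (rule summable_on_comparison_test[OF s])
    fix x
    have "cmod (f x) * cmod (g x) \<le> ((cmod (f x))\<^sup>2 + (cmod (g x))\<^sup>2) / 2"
      using sum_squares_bound[of "cmod (f x)" "cmod (g x)"] by (simp add: power2_eq_square)
    then show "norm (cnj (f x) * g x) \<le> ((cmod (f x))\<^sup>2 + (cmod (g x))\<^sup>2) / 2"
      by (simp add: norm_mult)
  qed simp
  then show ?thesis using summable_on_iff_abs_summable_on_complex by blast
qed

lemma linear_op_ell2: "linear_op V T \<Longrightarrow> f \<in> ell2 V \<Longrightarrow> T f \<in> ell2 V"
  by (simp add: linear_op_def)

lemma linear_op_comb: "linear_op V T \<Longrightarrow> f \<in> ell2 V \<Longrightarrow> g \<in> ell2 V \<Longrightarrow>
   T (\<lambda>x. c * f x + g x) = (\<lambda>x. c * T f x + T g x)"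
  by (simp add: linear_op_def)

lemma linear_op_zero: "linear_op V T \<Longrightarrow> T (\<lambda>x. 0) = (\<lambda>x. 0)"
  using linear_op_comb[OF _ ell2_zero ell2_zero, of V T "-1"] by simp

lemma linear_op_add: "linear_op V T \<Longrightarrow> f \<in> ell2 V \<Longrightarrow> g \<in> ell2 V \<Longrightarrow>
   T (\<lambda>x. f x + g x) = (\<lambda>x. T f x + T g x)"
  using linear_op_comb[of V T f g 1] by simp

lemma linear_op_diff: "linear_op V T \<Longrightarrow> f \<in> ell2 V \<Longrightarrow> g \<in> ell2 V \<Longrightarrow>
   T (\<lambda>x. f x - g x) = (\<lambda>x. T f x - T g x)"
  using linear_op_comb[of V T g f "-1"] by (simp add: fun_eq_iff)

lemma linear_op_commutator:
  assumes A: "linear_op V A" and B: "linear_op V B"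
  shows "linear_op V (\<lambda>f x. A (B f) x - B (A f) x)"
  unfolding linear_op_def
proof (intro conjI ballI allI)
  fix f assume f: "f \<in> ell2 V"
  show "(\<lambda>x. A (B f) x - B (A f) x) \<in> ell2 V"
    using ell2_diff[OF linear_op_ell2[OF A linear_op_ell2[OF B f]]
        linear_op_ell2[OF B linear_op_ell2[OF A f]]] by blast
next
  fix c f g assume f: "f \<in> ell2 V" and g: "g \<in> ell2 V"
  have "A (B (\<lambda>x. c * f x + g x)) = (\<lambda>x. c * A (B f) x + A (B g) x)"
    using linear_op_comb[OF B f g] linear_op_comb[OF A linear_op_ell2[OF B f] linear_op_ell2[OF B g]]
    by simp
  moreover have "B (A (\<lambda>x. c * f x + g x)) = (\<lambda>x. c * B (A f) x + B (A g) x)"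
    using linear_op_comb[OF A f g] linear_op_comb[OF B linear_op_ell2[OF A f] linear_op_ell2[OF A g]]
    by simp
  ultimately show "(\<lambda>x. A (B (\<lambda>x. c * f x + g x)) x - B (A (\<lambda>x. c * f x + g x)) x) =
     (\<lambda>x. c * (A (B f) x - B (A f) x) + (A (B g) x - B (A g) x))"
    by (simp add: fun_eq_iff algebra_simps)
qed

definition unit_vec :: "'v \<Rightarrow> 'v \<Rightarrow> complex" where
  "unit_vec v = (\<lambda>x. if x = v then 1 else 0)"

lemma unit_vec_ell2: "v \<in> V \<Longrightarrow> unit_vec v \<in> ell2 V"
  by (rule ell2_finite_support[of "{v}"]) (auto simp: unit_vec_def)

lemma linear_op_finite_support:
  assumes lin: "linear_op V T" and A: "finite A" "A \<subseteq> V"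
  shows "T (\<lambda>x. if x \<in> A then f x else 0) = (\<lambda>y. \<Sum>v\<in>A. f v * T (unit_vec v) y)"
  using A
proof (induction A rule: finite_induct)
  case empty
  then show ?case using linear_op_zero[OF lin] by simp
next
  case (insert v A)
  have "(\<lambda>x. if x \<in> insert v A then f x else 0) = (\<lambda>x. f v * unit_vec v x + (if x \<in> A then f x else 0))"
    using insert(2) by (auto simp: unit_vec_def)
  moreover have "T (\<lambda>x. f v * unit_vec v x + (if x \<in> A then f x else 0)) =
      (\<lambda>x. f v * T (unit_vec v) x + T (\<lambda>x. if x \<in> A then f x else 0) x)"
  proof (rule linear_op_comb[OF lin])
    show "unit_vec v \<in> ell2 V" using insert.prems by (intro unit_vec_ell2) auto
    show "(\<lambda>x. if x \<in> A then f x else 0) \<in> ell2 V"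
      by (rule ell2_finite_support[of A]) (use insert in auto)
  qed
  ultimately show ?case using insert by simp
qed

lemma linear_op_tendsto_zero_finite_support:
  assumes lin: "linear_op V T" and A: "finite A" "A \<subseteq> V"
    and supp: "\<And>k x. x \<notin> A \<Longrightarrow> h k x = 0" and lim: "\<And>x. x \<in> A \<Longrightarrow> (\<lambda>k. h k x) \<longlonglongrightarrow> 0"
  shows "(\<lambda>k. ell2_norm V (T (h k))) \<longlonglongrightarrow> 0"
proof (rule Lim_null_comparison)
  have Tv: "T (unit_vec v) \<in> ell2 V" if "v \<in> A" for v
    using linear_op_ell2[OF lin unit_vec_ell2] that A by blast
  have "h k = (\<lambda>x. if x \<in> A then h k x else 0)" for k
    using supp by auto
  then have "T (h k) = (\<lambda>y. \<Sum>v\<in>A. h k v * T (unit_vec v) y)" for k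
    using linear_op_finite_support[OF lin A] by metis
  moreover have "ell2_norm V (\<lambda>y. \<Sum>v\<in>A. h k v * T (unit_vec v) y) \<le>
      (\<Sum>v\<in>A. ell2_norm V (\<lambda>y. h k v * T (unit_vec v) y))" for k
    by (rule conjunct2[OF ell2_sum[OF A(1)]]) (use ell2_scale Tv in blast)
  ultimately have "ell2_norm V (T (h k)) \<le> (\<Sum>v\<in>A. ell2_norm V (\<lambda>y. h k v * T (unit_vec v) y))" for k
    by simp
  also have "\<dots> k \<le> (\<Sum>v\<in>A. cmod (h k v) * ell2_norm V (T (unit_vec v)))" for k
    by (rule sum_mono) (use ell2_scale Tv in blast)
  finally show "\<forall>\<^sub>F k in sequentially. norm (ell2_norm V (T (h k))) \<le>
      (\<Sum>v\<in>A. cmod (h k v) * ell2_norm V (T (unit_vec v)))"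
    by (simp add: ell2_norm_nonneg)
  show "(\<lambda>k. \<Sum>v\<in>A. cmod (h k v) * ell2_norm V (T (unit_vec v))) \<longlonglongrightarrow> 0"
    using tendsto_sum[of A "\<lambda>v k. cmod (h k v) * ell2_norm V (T (unit_vec v))" "\<lambda>_. 0"]
    by (simp add: lim tendsto_mult_left_zero tendsto_norm_zero)
qed

section \<open>A compactness criterion\<close>

lemma bounded_convergent_subseq_finite:
  fixes g :: "nat \<Rightarrow> 'v \<Rightarrow> complex"
  assumes "finite A" "\<And>k x. x \<in> A \<Longrightarrow> cmod (g k x) \<le> B"
  shows "\<exists>r. strict_mono r \<and> (\<forall>x\<in>A. convergent (\<lambda>k. g (r k) x))"
  using assms
proof (induction A arbitrary: g rule: finite_induct)
  case empty
  then show ?case by (auto intro: exI[of _ id] simp: strict_mono_def)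
next
  case (insert v A)
  obtain r where r: "strict_mono r" "\<forall>x\<in>A. convergent (\<lambda>k. g (r k) x)"
    using insert.IH insert.prems by blast
  have "bounded (range (\<lambda>k. g (r k) v))"
    using insert.prems by (auto simp: bounded_iff)
  then obtain l r' where r': "strict_mono r'" "((\<lambda>k. g (r k) v) \<circ> r') \<longlonglongrightarrow> l"
    using bounded_imp_convergent_subsequence by blast
  have "convergent (\<lambda>k. g ((r \<circ> r') k) x)" if "x \<in> insert v A" for x
  proof (cases "x = v")
    case True
    then show ?thesis using r' by (auto simp: convergent_def o_def)
  next
    case False
    then have "convergent ((\<lambda>k. g (r k) x) \<circ> r')"
      using that r r' by (intro convergent_subseq_convergent) auto
    then show ?thesis by (simp add: o_def)
  qed
  moreover have "strict_mono (r \<circ> r')" using r r' by (simp add: strict_mono_o)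
  ultimately show ?case by blast
qed

lemma bounded_convergent_subseq_diagonal:
  fixes g :: "nat \<Rightarrow> 'v \<Rightarrow> complex" and A :: "nat \<Rightarrow> 'v set"
  assumes fin: "\<And>L. finite (A L)" and bd: "\<And>k x L. x \<in> A L \<Longrightarrow> cmod (g k x) \<le> B"
  shows "\<exists>r. strict_mono r \<and> (\<forall>L. \<forall>x\<in>A L. convergent (\<lambda>k. g (r k) x))"
proof -
  define P where "P = (\<lambda>L (s::nat\<Rightarrow>nat). \<forall>x\<in>A L. convergent (\<lambda>k. g (s k) x))"
  interpret subseqs P
  proof
    fix n and s :: "nat \<Rightarrow> nat"
    obtain r where "strict_mono r" "\<forall>x\<in>A n. convergent (\<lambda>k. g (s (r k)) x)"
      using bounded_convergent_subseq_finite[OF fin, of n "\<lambda>k. g (s k)" B] bd by blast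
    then show "\<exists>r'. strict_mono r' \<and> P n (s \<circ> r')" unfolding P_def by (auto simp: o_def)
  qed
  have stable: "P n (s \<circ> r)" if "strict_mono r" "P n s" for r s :: "nat \<Rightarrow> nat" and n
    using that convergent_subseq_convergent[of "\<lambda>k. g (s k) _" r] unfolding P_def by (auto simp: o_def)
  have "convergent (\<lambda>k. g (diagseq k) x)" if x: "x \<in> A L" for L x
  proof -
    have "P L (diagseq \<circ> ((+) (Suc L)))" by (rule diagseq_holds[OF stable])
    then have "convergent (\<lambda>k. g (diagseq (k + Suc L)) x)" using x
      unfolding P_def by (simp add: o_def add.commute)
    then show ?thesis
      using convergent_ignore_initial_segment[of "\<lambda>k. g (diagseq k) x" "Suc L"] by simp
  qed
  then show ?thesis using subseq_diagseq by blast
qed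

lemma ell2_pointwise_limit:
  assumes f: "\<And>k. f k \<in> ell2 V" "\<And>k. ell2_norm V (f k) \<le> B"
    and lim: "\<And>x. x \<in> V \<Longrightarrow> (\<lambda>k. f k x) \<longlonglongrightarrow> \<phi> x" and out: "\<And>x. x \<notin> V \<Longrightarrow> \<phi> x = 0"
  shows "\<phi> \<in> ell2 V \<and> ell2_norm V \<phi> \<le> B"
proof (rule ell2I_finite_sums[OF out])
  show B: "B \<ge> 0" using f(2)[of 0] ell2_norm_nonneg[of V "f 0"] by linarith
  fix F assume F: "finite F" "F \<subseteq> V"
  have "(\<lambda>k. \<Sum>x\<in>F. (cmod (f k x))\<^sup>2) \<longlonglongrightarrow> (\<Sum>x\<in>F. (cmod (\<phi> x))\<^sup>2)"
    using F by (intro tendsto_intros lim) auto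
  moreover have "(\<Sum>x\<in>F. (cmod (f k x))\<^sup>2) \<le> B\<^sup>2" for k
  proof -
    have "(\<Sum>x\<in>F. (cmod (f k x))\<^sup>2) \<le> (ell2_norm V (f k))\<^sup>2"
      using ell2_finite_sum_le[OF f(1) F] .
    also have "\<dots> \<le> B\<^sup>2" using f(2) ell2_norm_nonneg by (intro power_mono) auto
    finally show ?thesis .
  qed
  ultimately show "(\<Sum>x\<in>F. (cmod (\<phi> x))\<^sup>2) \<le> B\<^sup>2"
    by (intro LIMSEQ_le_const2) auto
qed

lemma bounded_ell2_convergent_subseq:
  fixes f :: "nat \<Rightarrow> 'v \<Rightarrow> complex" and lev :: "'v \<Rightarrow> nat"
  assumes levels_finite: "\<And>L. finite {x\<in>V. lev x \<le> L}"
    and f: "\<And>k. f k \<in> ell2 V" "\<And>k. ell2_norm V (f k) \<le> B"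
  shows "\<exists>r \<phi>. strict_mono r \<and> \<phi> \<in> ell2 V \<and> ell2_norm V \<phi> \<le> B \<and>
           (\<forall>x\<in>V. (\<lambda>k. f (r k) x) \<longlonglongrightarrow> \<phi> x)"
proof -
  define A where "A L = {x\<in>V. lev x \<le> L}" for L
  have "cmod (f k x) \<le> B" if "x \<in> A L" for k x L
    using ell2_norm_ge_point[OF f(1), of x k] f(2)[of k] that by (simp add: A_def)
  then obtain r where r: "strict_mono r" "\<forall>L. \<forall>x\<in>A L. convergent (\<lambda>k. f (r k) x)"
    using bounded_convergent_subseq_diagonal[of A, OF levels_finite[folded A_def]] by blast
  define \<phi> where "\<phi> x = (if x \<in> V then lim (\<lambda>k. f (r k) x) else 0)" for x
  have lim: "(\<lambda>k. f (r k) x) \<longlonglongrightarrow> \<phi> x" if "x \<in> V" for x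
  proof -
    have "convergent (\<lambda>k. f (r k) x)" using r(2) that by (auto simp: A_def)
    then show ?thesis using that by (simp add: \<phi>_def convergent_LIMSEQ_iff)
  qed
  have "\<phi> \<in> ell2 V \<and> ell2_norm V \<phi> \<le> B"
    by (rule ell2_pointwise_limit[of "\<lambda>k. f (r k)"]) (use f lim in \<open>auto simp: \<phi>_def\<close>)
  then show ?thesis using r(1) lim by blast
qed

text \<open>Below level \<open>L\<close> only finitely many coordinates matter, so there pointwise convergence
  becomes norm convergence; above it the tail hypothesis makes \<open>T\<close> uniformly small.\<close>

lemma linear_op_tendsto_zero_pointwise:
  fixes T :: "('v \<Rightarrow> complex) \<Rightarrow> ('v \<Rightarrow> complex)" and lev :: "'v \<Rightarrow> nat"
  assumes lin: "linear_op V T"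
    and levels_finite: "\<And>L. finite {x\<in>V. lev x \<le> L}"
    and tail: "\<And>\<epsilon>. \<epsilon> > 0 \<Longrightarrow> \<exists>L. \<forall>f\<in>ell2 V. (\<forall>x\<in>V. lev x \<le> L \<longrightarrow> f x = 0) \<longrightarrow>
                  ell2_norm V (T f) \<le> \<epsilon> * ell2_norm V f"
    and h: "\<And>k. h k \<in> ell2 V" "\<And>k. ell2_norm V (h k) \<le> C"
    and lim: "\<And>x. x \<in> V \<Longrightarrow> (\<lambda>k. h k x) \<longlonglongrightarrow> 0"
  shows "(\<lambda>k. ell2_norm V (T (h k))) \<longlonglongrightarrow> 0"
proof (rule LIMSEQ_I)
  fix \<epsilon> :: real assume \<epsilon>: "\<epsilon> > 0"
  have C: "C \<ge> 0" using h(2)[of 0] ell2_norm_nonneg[of V "h 0"] by linarith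
  obtain L where L: "\<forall>f\<in>ell2 V. (\<forall>x\<in>V. lev x \<le> L \<longrightarrow> f x = 0) \<longrightarrow>
      ell2_norm V (T f) \<le> \<epsilon> / (2 * C + 1) * ell2_norm V f"
    using tail[of "\<epsilon> / (2 * C + 1)"] \<epsilon> C by auto
  define A where "A = {x\<in>V. lev x \<le> L}"
  define low where "low k = (\<lambda>x. if x \<in> A then h k x else 0)" for k
  define high where "high k = (\<lambda>x. if x \<in> - A then h k x else 0)" for k
  have low: "low k \<in> ell2 V" for k
    unfolding low_def by (rule ell2_finite_support[of A]) (auto simp: A_def levels_finite)
  have high: "high k \<in> ell2 V" "ell2_norm V (high k) \<le> C" for k
    using ell2_restrict[OF h(1)[of k], of "- A"] h(2)[of k] unfolding high_def by auto
  have Thigh: "ell2_norm V (T (high k)) \<le> \<epsilon> / (2 * C + 1) * C" for k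
  proof -
    have "ell2_norm V (T (high k)) \<le> \<epsilon> / (2 * C + 1) * ell2_norm V (high k)"
      using L high(1) by (auto simp: high_def A_def)
    also have "\<dots> \<le> \<epsilon> / (2 * C + 1) * C"
      using high(2) \<epsilon> C by (intro mult_left_mono) auto
    finally show ?thesis .
  qed
  have small: "\<epsilon> / (2 * C + 1) * C < \<epsilon> / 2"
    using \<epsilon> C by (simp add: field_simps)
  have "(\<lambda>k. ell2_norm V (T (low k))) \<longlonglongrightarrow> 0"
    by (rule linear_op_tendsto_zero_finite_support[OF lin, of A])
      (auto simp: A_def levels_finite low_def lim)
  then obtain N where Tlow: "\<And>k. k \<ge> N \<Longrightarrow> ell2_norm V (T (low k)) < \<epsilon> / 2"
    using order_tendstoD(2)[of _ 0 sequentially "\<epsilon> / 2"] \<epsilon> by (auto simp: eventually_sequentially)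
  have triangle: "ell2_norm V (T (h k)) \<le> ell2_norm V (T (low k)) + ell2_norm V (T (high k))" for k
  proof -
    have "h k = (\<lambda>x. low k x + high k x)" by (auto simp: low_def high_def)
    then have "T (h k) = (\<lambda>x. T (low k) x + T (high k) x)"
      using linear_op_add[OF lin low high(1)] by simp
    then show ?thesis
      using ell2_add[OF linear_op_ell2[OF lin low] linear_op_ell2[OF lin high(1)]] by simp
  qed
  have "ell2_norm V (T (h k)) < \<epsilon>" if "k \<ge> N" for k
    using Tlow[OF that] triangle[of k] Thigh[of k] small by linarith
  then show "\<exists>N. \<forall>k\<ge>N. norm (ell2_norm V (T (h k)) - 0) < \<epsilon>"
    using ell2_norm_nonneg[of V] by (metis real_norm_def abs_of_nonneg diff_zero)
qed

lemma compact_operator_ell2I: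
  fixes T :: "('v \<Rightarrow> complex) \<Rightarrow> ('v \<Rightarrow> complex)" and lev :: "'v \<Rightarrow> nat"
  assumes lin: "linear_op V T"
    and levels_finite: "\<And>L. finite {x\<in>V. lev x \<le> L}"
    and tail: "\<And>\<epsilon>. \<epsilon> > 0 \<Longrightarrow> \<exists>L. \<forall>f\<in>ell2 V. (\<forall>x\<in>V. lev x \<le> L \<longrightarrow> f x = 0) \<longrightarrow>
                  ell2_norm V (T f) \<le> \<epsilon> * ell2_norm V f"
  shows "compact_operator_ell2 V T"
  unfolding compact_operator_ell2_def
proof (intro conjI allI impI lin)
  fix f :: "nat \<Rightarrow> 'v \<Rightarrow> complex" and B :: real
  assume "\<forall>n. f n \<in> ell2 V \<and> ell2_norm V (f n) \<le> B"
  then have f: "\<And>k. f k \<in> ell2 V" "\<And>k. ell2_norm V (f k) \<le> B" by blast+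
  obtain r \<phi> where r: "strict_mono r" and \<phi>: "\<phi> \<in> ell2 V" "ell2_norm V \<phi> \<le> B"
    and lim: "\<And>x. x \<in> V \<Longrightarrow> (\<lambda>k. f (r k) x) \<longlonglongrightarrow> \<phi> x"
    using bounded_ell2_convergent_subseq[of V lev f B] levels_finite f by blast
  define h where "h k = (\<lambda>x. f (r k) x - \<phi> x)" for k
  have h: "h k \<in> ell2 V" "ell2_norm V (h k) \<le> 2 * B" for k
    using ell2_diff[OF f(1)[of "r k"] \<phi>(1)] f(2)[of "r k"] \<phi>(2) by (auto simp: h_def)
  have "(\<lambda>k. h k x) \<longlonglongrightarrow> 0" if "x \<in> V" for x
    using tendsto_diff[OF lim[OF that] tendsto_const[of "\<phi> x"]] by (simp add: h_def)
  then have "(\<lambda>k. ell2_norm V (T (h k))) \<longlonglongrightarrow> 0"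
    using linear_op_tendsto_zero_pointwise[OF lin levels_finite tail, of h "2 * B"] h by blast
  moreover have "(\<lambda>x. T (f (r k)) x - T \<phi> x) = T (h k)" for k
    using linear_op_diff[OF lin f(1) \<phi>(1)] by (simp add: h_def)
  ultimately show "\<exists>r g. strict_mono r \<and> g \<in> ell2 V \<and>
      (\<lambda>n. ell2_norm V (\<lambda>x. T (f (r n)) x - g x)) \<longlonglongrightarrow> 0"
    using r linear_op_ell2[OF lin \<phi>(1)] by (intro exI[of _ r] exI[of _ "T \<phi>"]) auto
qed

lemma ell2_norm_le_local_sum:
  fixes N :: "'v \<Rightarrow> 'v set" and K :: nat
  assumes f: "f \<in> ell2 V" and out: "\<And>x. x \<notin> V \<Longrightarrow> g x = 0" and \<eta>: "\<eta> \<ge> 0"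
    and N: "\<And>x. x \<in> V \<Longrightarrow> finite (N x) \<and> N x \<subseteq> V \<and> card (N x) \<le> K"
    and mult: "\<And>t. t \<in> V \<Longrightarrow> finite {x\<in>V. t \<in> N x} \<and> card {x\<in>V. t \<in> N x} \<le> K"
    and local: "\<And>x. x \<in> V \<Longrightarrow> cmod (g x) \<le> \<eta> * (\<Sum>t\<in>N x. cmod (f t))"
  shows "g \<in> ell2 V \<and> ell2_norm V g \<le> \<eta> * K * ell2_norm V f"
proof (rule ell2I_finite_sums[OF out])
  show "0 \<le> \<eta> * K * ell2_norm V f" using \<eta> ell2_norm_nonneg[of V f] by simp
  fix F assume F: "finite F" "F \<subseteq> V"
  define G where "G = (\<Union>x\<in>F. N x)"
  have G: "finite G" "G \<subseteq> V" using F N unfolding G_def by blast+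
  have local_sq: "(cmod (g x))\<^sup>2 \<le> \<eta>\<^sup>2 * K * (\<Sum>t\<in>N x. (cmod (f t))\<^sup>2)" if x: "x \<in> F" for x
  proof -
    have "(cmod (g x))\<^sup>2 \<le> (\<eta> * (\<Sum>t\<in>N x. cmod (f t)))\<^sup>2"
      using local x F by (intro power_mono) auto
    also have "\<dots> = \<eta>\<^sup>2 * (\<Sum>t\<in>N x. cmod (f t))\<^sup>2" by (simp add: power_mult_distrib)
    also have "\<dots> \<le> \<eta>\<^sup>2 * ((\<Sum>t\<in>N x. (cmod (f t))\<^sup>2) * card (N x))"
      by (intro mult_left_mono sum_squared_le_sum_of_squares) auto
    also have "\<dots> \<le> \<eta>\<^sup>2 * ((\<Sum>t\<in>N x. (cmod (f t))\<^sup>2) * K)"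
      using N x F by (intro mult_left_mono) (auto intro!: mult_left_mono sum_nonneg)
    finally show ?thesis by (simp add: mult_ac)
  qed
  have neighbourhood_sum: "(\<Sum>x\<in>F. \<Sum>t\<in>N x. (cmod (f t))\<^sup>2) \<le> K * (ell2_norm V f)\<^sup>2"
  proof -
    have "(\<Sum>x\<in>F. \<Sum>t\<in>N x. (cmod (f t))\<^sup>2) =
        (\<Sum>x\<in>F. \<Sum>t\<in>{t. t \<in> G \<and> t \<in> N x}. (cmod (f t))\<^sup>2)"
      by (rule sum.cong) (auto simp: G_def intro: sum.cong)
    also have "\<dots> = (\<Sum>t\<in>G. real (card {x. x \<in> F \<and> t \<in> N x}) * (cmod (f t))\<^sup>2)"
      by (subst sum.swap_restrict[OF F(1) G(1)]) simp
    also have "\<dots> \<le> (\<Sum>t\<in>G. K * (cmod (f t))\<^sup>2)"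
    proof (rule sum_mono)
      fix t assume "t \<in> G"
      then have t: "t \<in> V" using G by blast
      have "card {x. x \<in> F \<and> t \<in> N x} \<le> card {x\<in>V. t \<in> N x}"
        by (rule card_mono) (use mult[OF t] F in auto)
      then show "real (card {x. x \<in> F \<and> t \<in> N x}) * (cmod (f t))\<^sup>2 \<le> K * (cmod (f t))\<^sup>2"
        using mult[OF t] by (intro mult_right_mono) auto
    qed
    also have "\<dots> \<le> K * (ell2_norm V f)\<^sup>2"
      using ell2_finite_sum_le[OF f G] by (simp add: sum_distrib_left[symmetric] mult_left_mono)
    finally show ?thesis .
  qed
  have "(\<Sum>x\<in>F. (cmod (g x))\<^sup>2) \<le> \<eta>\<^sup>2 * K * (\<Sum>x\<in>F. \<Sum>t\<in>N x. (cmod (f t))\<^sup>2)"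
    using local_sq by (simp add: sum_mono sum_distrib_left)
  also have "\<dots> \<le> \<eta>\<^sup>2 * K * (K * (ell2_norm V f)\<^sup>2)"
    using neighbourhood_sum by (intro mult_left_mono) auto
  finally show "(\<Sum>x\<in>F. (cmod (g x))\<^sup>2) \<le> (\<eta> * K * ell2_norm V f)\<^sup>2"
    by (simp add: power_mult_distrib power2_eq_square mult_ac)
qed

lemma compact_operator_ell2_local_decay:
  fixes T :: "('v \<Rightarrow> complex) \<Rightarrow> ('v \<Rightarrow> complex)" and lev :: "'v \<Rightarrow> nat"
    and N :: "'v \<Rightarrow> 'v set" and \<delta> :: "nat \<Rightarrow> real" and K :: nat
  assumes lin: "linear_op V T"
    and levels_finite: "\<And>L. finite {x\<in>V. lev x \<le> L}"
    and out: "\<And>f x. f \<in> ell2 V \<Longrightarrow> x \<notin> V \<Longrightarrow> T f x = 0"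
    and N: "\<And>x. x \<in> V \<Longrightarrow> finite (N x) \<and> N x \<subseteq> V \<and> card (N x) \<le> K"
    and N_lev: "\<And>x t. x \<in> V \<Longrightarrow> t \<in> N x \<Longrightarrow> lev t \<le> lev x"
    and mult: "\<And>t. t \<in> V \<Longrightarrow> finite {x\<in>V. t \<in> N x} \<and> card {x\<in>V. t \<in> N x} \<le> K"
    and local: "\<And>f x. f \<in> ell2 V \<Longrightarrow> x \<in> V \<Longrightarrow> cmod (T f x) \<le> \<delta> (lev x) * (\<Sum>t\<in>N x. cmod (f t))"
    and \<delta>_nonneg: "\<And>n. \<delta> n \<ge> 0" and \<delta>_lim: "\<delta> \<longlonglongrightarrow> 0"
  shows "compact_operator_ell2 V T"
proof (rule compact_operator_ell2I[OF lin levels_finite])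
  fix \<epsilon> :: real assume \<epsilon>: "\<epsilon> > 0"
  define \<eta> where "\<eta> = \<epsilon> / (K + 1)"
  have \<eta>: "\<eta> > 0" "\<eta> * K \<le> \<epsilon>" using \<epsilon> by (auto simp: \<eta>_def field_simps)
  obtain L where L: "\<And>n. n \<ge> L \<Longrightarrow> \<delta> n < \<eta>"
    using order_tendstoD(2)[OF \<delta>_lim \<eta>(1)] by (auto simp: eventually_sequentially)
  show "\<exists>L. \<forall>f\<in>ell2 V. (\<forall>x\<in>V. lev x \<le> L \<longrightarrow> f x = 0) \<longrightarrow> ell2_norm V (T f) \<le> \<epsilon> * ell2_norm V f"
  proof (intro exI[of _ L] ballI impI)
    fix f assume f: "f \<in> ell2 V" and low: "\<forall>x\<in>V. lev x \<le> L \<longrightarrow> f x = 0"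
    have "cmod (T f x) \<le> \<eta> * (\<Sum>t\<in>N x. cmod (f t))" if x: "x \<in> V" for x
    proof (cases "lev x \<le> L")
      case True
      then have "\<forall>t\<in>N x. f t = 0" using low N N_lev x by (meson order_trans subsetD)
      then show ?thesis using local[OF f x] \<eta> by simp
    next
      case False
      then have "\<delta> (lev x) \<le> \<eta>" using L[of "lev x"] by simp
      then show ?thesis
        using local[OF f x] \<delta>_nonneg[of "lev x"]
        by (meson mult_right_mono order_trans sum_nonneg norm_ge_zero)
    qed
    then have "ell2_norm V (T f) \<le> \<eta> * K * ell2_norm V f"
      using ell2_norm_le_local_sum[OF f out[OF f] _ N mult] \<eta>(1) by auto
    also have "\<dots> \<le> \<epsilon> * ell2_norm V f"
      using \<eta>(2) ell2_norm_nonneg by (intro mult_right_mono) auto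
    finally show "ell2_norm V (T f) \<le> \<epsilon> * ell2_norm V f" .
  qed
qed

section \<open>Weighted shifts along a parent map\<close>

text \<open>\<open>D \<subseteq> V\<close> is the set of vertices that have a parent \<open>p w\<close>; the shift moves the value at
  \<open>p w\<close> to \<open>w\<close> with weight \<open>lam (p w)\<close>.\<close>

locale parent_shift =
  fixes V :: "'v set" and D :: "'v set" and p :: "'v \<Rightarrow> 'v" and lam :: "'v \<Rightarrow> complex" and K :: real
  assumes D_subset: "D \<subseteq> V" and parent_in: "\<And>w. w \<in> D \<Longrightarrow> p w \<in> V"
    and fibre_finite: "\<And>v. v \<in> V \<Longrightarrow> finite {w\<in>D. p w = v}"
    and weight_bound: "\<And>v. v \<in> V \<Longrightarrow> real (card {w\<in>D. p w = v}) * (cmod (lam v))\<^sup>2 \<le> K"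
    and K_nonneg: "K \<ge> 0"
begin

definition fibre :: "'v \<Rightarrow> 'v set" where
  "fibre v = {w\<in>D. p w = v}"

definition pshift :: "('v \<Rightarrow> complex) \<Rightarrow> ('v \<Rightarrow> complex)" where
  "pshift f = (\<lambda>w. if w \<in> D then lam (p w) * f (p w) else 0)"

definition pshift_adj :: "('v \<Rightarrow> complex) \<Rightarrow> ('v \<Rightarrow> complex)" where
  "pshift_adj g = (\<lambda>v. if v \<in> V then cnj (lam v) * (\<Sum>w\<in>fibre v. g w) else 0)"

lemma pshift_ell2:
  assumes f: "f \<in> ell2 V"
  shows "pshift f \<in> ell2 V \<and> ell2_norm V (pshift f) \<le> sqrt K * ell2_norm V f"
proof (rule ell2I_finite_sums)
  show "\<And>x. x \<notin> V \<Longrightarrow> pshift f x = 0" using D_subset by (auto simp: pshift_def)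
  show "0 \<le> sqrt K * ell2_norm V f" using K_nonneg ell2_norm_nonneg[of V f] by simp
  fix F assume F: "finite F" "F \<subseteq> V"
  define G where "G v = {w. w \<in> F \<inter> D \<and> p w = v}" for v
  have "(\<Sum>w\<in>F. (cmod (pshift f w))\<^sup>2) = (\<Sum>w\<in>F \<inter> D. (cmod (lam (p w)))\<^sup>2 * (cmod (f (p w)))\<^sup>2)"
    by (rule sum.mono_neutral_cong_right)
      (use F in \<open>auto simp: pshift_def norm_mult power_mult_distrib\<close>)
  also have "\<dots> = (\<Sum>v\<in>p ` (F \<inter> D). \<Sum>w\<in>G v. (cmod (lam (p w)))\<^sup>2 * (cmod (f (p w)))\<^sup>2)"
    unfolding G_def using F by (intro sum.image_gen) auto
  also have "\<dots> = (\<Sum>v\<in>p ` (F \<inter> D). real (card (G v)) * (cmod (lam v))\<^sup>2 * (cmod (f v))\<^sup>2)"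
    by (rule sum.cong) (auto simp: G_def)
  also have "\<dots> \<le> (\<Sum>v\<in>p ` (F \<inter> D). K * (cmod (f v))\<^sup>2)"
  proof (rule sum_mono)
    fix v assume "v \<in> p ` (F \<inter> D)"
    then have v: "v \<in> V" using parent_in by auto
    have "card (G v) \<le> card {w\<in>D. p w = v}"
      by (rule card_mono[OF fibre_finite[OF v]]) (auto simp: G_def)
    then have "real (card (G v)) * (cmod (lam v))\<^sup>2 \<le> K"
      using weight_bound[OF v] by (meson mult_right_mono of_nat_le_iff order_trans zero_le_power2)
    then show "real (card (G v)) * (cmod (lam v))\<^sup>2 * (cmod (f v))\<^sup>2 \<le> K * (cmod (f v))\<^sup>2"
      by (intro mult_right_mono) auto
  qed
  also have "\<dots> = K * (\<Sum>v\<in>p ` (F \<inter> D). (cmod (f v))\<^sup>2)" by (simp add: sum_distrib_left)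
  also have "\<dots> \<le> K * (ell2_norm V f)\<^sup>2"
    by (intro mult_left_mono ell2_finite_sum_le[OF f] K_nonneg) (use F parent_in in auto)
  also have "\<dots> = (sqrt K * ell2_norm V f)\<^sup>2" using K_nonneg by (simp add: power_mult_distrib)
  finally show "(\<Sum>w\<in>F. (cmod (pshift f w))\<^sup>2) \<le> (sqrt K * ell2_norm V f)\<^sup>2" .
qed

lemma pshift_linear: "linear_op V pshift"
  unfolding linear_op_def using pshift_ell2 by (auto simp: pshift_def fun_eq_iff algebra_simps)

lemma pshift_bounded: "bounded_op V pshift"
  unfolding bounded_op_def using pshift_linear pshift_ell2 by blast

lemma pshift_adj_ell2:
  assumes g: "g \<in> ell2 V"
  shows "pshift_adj g \<in> ell2 V \<and> ell2_norm V (pshift_adj g) \<le> sqrt K * ell2_norm V g"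
proof (rule ell2I_finite_sums)
  show "\<And>x. x \<notin> V \<Longrightarrow> pshift_adj g x = 0" by (auto simp: pshift_adj_def)
  show "0 \<le> sqrt K * ell2_norm V g" using K_nonneg ell2_norm_nonneg[of V g] by simp
  fix F assume F: "finite F" "F \<subseteq> V"
  have fin: "finite (fibre v)" if "v \<in> F" for v using fibre_finite F that by (auto simp: fibre_def)
  have "(\<Sum>v\<in>F. (cmod (pshift_adj g v))\<^sup>2) = (\<Sum>v\<in>F. (cmod (lam v))\<^sup>2 * (cmod (\<Sum>w\<in>fibre v. g w))\<^sup>2)"
    by (rule sum.cong) (use F in \<open>auto simp: pshift_adj_def norm_mult power_mult_distrib\<close>)
  also have "\<dots> \<le> (\<Sum>v\<in>F. K * (\<Sum>w\<in>fibre v. (cmod (g w))\<^sup>2))"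
  proof (rule sum_mono)
    fix v assume v: "v \<in> F"
    have "(cmod (\<Sum>w\<in>fibre v. g w))\<^sup>2 \<le> (\<Sum>w\<in>fibre v. cmod (g w))\<^sup>2"
      by (intro power_mono norm_sum) auto
    also have "\<dots> \<le> (\<Sum>w\<in>fibre v. (cmod (g w))\<^sup>2) * card (fibre v)"
      by (rule sum_squared_le_sum_of_squares)
    finally have "(cmod (lam v))\<^sup>2 * (cmod (\<Sum>w\<in>fibre v. g w))\<^sup>2 \<le>
        (cmod (lam v))\<^sup>2 * ((\<Sum>w\<in>fibre v. (cmod (g w))\<^sup>2) * card (fibre v))"
      by (rule mult_left_mono) simp
    also have "\<dots> = (real (card (fibre v)) * (cmod (lam v))\<^sup>2) * (\<Sum>w\<in>fibre v. (cmod (g w))\<^sup>2)"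
      by simp
    also have "\<dots> \<le> K * (\<Sum>w\<in>fibre v. (cmod (g w))\<^sup>2)"
      using weight_bound F v by (intro mult_right_mono) (auto simp: fibre_def intro: sum_nonneg)
    finally show "(cmod (lam v))\<^sup>2 * (cmod (\<Sum>w\<in>fibre v. g w))\<^sup>2 \<le> K * (\<Sum>w\<in>fibre v. (cmod (g w))\<^sup>2)" .
  qed
  also have "\<dots> = K * (\<Sum>w\<in>(\<Union>v\<in>F. fibre v). (cmod (g w))\<^sup>2)"
    by (subst sum.UNION_disjoint) (use F fin in \<open>auto simp: sum_distrib_left fibre_def\<close>)
  also have "\<dots> \<le> K * (ell2_norm V g)\<^sup>2"
    by (intro mult_left_mono ell2_finite_sum_le[OF g] K_nonneg)
      (use F fin D_subset in \<open>auto simp: fibre_def\<close>)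
  also have "\<dots> = (sqrt K * ell2_norm V g)\<^sup>2" using K_nonneg by (simp add: power_mult_distrib)
  finally show "(\<Sum>v\<in>F. (cmod (pshift_adj g v))\<^sup>2) \<le> (sqrt K * ell2_norm V g)\<^sup>2" .
qed

lemma pshift_adj_linear: "linear_op V pshift_adj"
  unfolding linear_op_def using pshift_adj_ell2
  by (auto simp: pshift_adj_def fun_eq_iff algebra_simps sum.distrib sum_distrib_left)

text \<open>Both inner products are the same sum over the edges \<open>(p w, w)\<close>, summed either over the
  child \<open>w\<close> or first over the children of each parent.\<close>

lemma pshift_adjoint: "is_adjoint V pshift pshift_adj"
  unfolding is_adjoint_def
proof (intro conjI ballI)
  show "pshift_adj g \<in> ell2 V" if "g \<in> ell2 V" for g using pshift_adj_ell2[OF that] by blast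
  fix f g assume f: "f \<in> ell2 V" and g: "g \<in> ell2 V"
  define H where "H = (\<lambda>(v, w). cnj (lam v * f v) * g w)"
  have bij: "bij_betw (\<lambda>w. (p w, w)) D (Sigma V fibre)"
    by (rule bij_betwI[where g=snd]) (auto simp: fibre_def parent_in)
  have "ell2_inner V (pshift f) g = (\<Sum>\<^sub>\<infinity>w\<in>D. H (p w, w))"
    unfolding ell2_inner_def
    by (rule infsum_cong_neutral) (use D_subset in \<open>auto simp: pshift_def H_def\<close>)
  also have "\<dots> = infsum H (Sigma V fibre)"
    by (rule infsum_reindex_bij_betw[OF bij])
  also have "\<dots> = (\<Sum>\<^sub>\<infinity>v\<in>V. \<Sum>\<^sub>\<infinity>w\<in>fibre v. H (v, w))"
  proof (rule infsum_Sigma_banach[symmetric])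
    have "(\<lambda>x. cnj (pshift f x) * g x) summable_on D"
      using ell2_inner_summable[OF conjunct1[OF pshift_ell2[OF f]] g] D_subset
      by (rule summable_on_subset_banach)
    then have "(\<lambda>w. H (p w, w)) summable_on D"
      by (rule summable_on_cong[THEN iffD1, rotated]) (auto simp: pshift_def H_def)
    then show "H summable_on Sigma V fibre" using summable_on_reindex_bij_betw[OF bij] by blast
  qed
  also have "\<dots> = (\<Sum>\<^sub>\<infinity>v\<in>V. cnj (f v) * pshift_adj g v)"
  proof (rule infsum_cong)
    fix v assume v: "v \<in> V"
    have "finite (fibre v)" using fibre_finite v by (simp add: fibre_def)
    then show "(\<Sum>\<^sub>\<infinity>w\<in>fibre v. H (v, w)) = cnj (f v) * pshift_adj g v"
      using v by (simp add: H_def pshift_adj_def sum_distrib_left mult_ac)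
  qed
  finally show "ell2_inner V (pshift f) g = ell2_inner V f (pshift_adj g)"
    by (simp add: ell2_inner_def)
qed

end

section \<open>Rooted trees\<close>

locale rooted_tree =
  fixes V :: "'a set" and chi :: "'a \<Rightarrow> 'a set"
  assumes tree: "rooted_directed_tree V chi"
    and locally_finite: "locally_finite_tree V chi"
    and leafless: "leafless_tree V chi"
begin

abbreviation "rt \<equiv> tree_root V chi"
abbreviation "depth \<equiv> tree_depth V chi"

lemma children_subset: "u \<in> V \<Longrightarrow> chi u \<subseteq> V"
  using tree by (auto simp: rooted_directed_tree_def)

lemma children_finite: "u \<in> V \<Longrightarrow> finite (chi u)"
  using locally_finite by (simp add: locally_finite_tree_def)

lemma card_children_ge_1: "u \<in> V \<Longrightarrow> card (chi u) \<ge> 1"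
  using children_finite leafless by (simp add: leafless_tree_def Suc_le_eq card_gt_0_iff)

lemma parent_unique: "u1 \<in> V \<Longrightarrow> u2 \<in> V \<Longrightarrow> x \<in> chi u1 \<Longrightarrow> x \<in> chi u2 \<Longrightarrow> u1 = u2"
  using tree unfolding rooted_directed_tree_def tree_edges_def by blast

lemma connected: "u \<in> V \<Longrightarrow> v \<in> V \<Longrightarrow>
    (u, v) \<in> (tree_edges V chi \<union> (tree_edges V chi)\<inverse>)\<^sup>*"
  using tree unfolding rooted_directed_tree_def by blast

lemma root_in: "rt \<in> V" and root_not_child: "u \<in> V \<Longrightarrow> rt \<notin> chi u"
proof -
  have "\<exists>!r. r \<in> V \<and> \<not> (\<exists>u. (u, r) \<in> tree_edges V chi)"
    using tree by (simp add: rooted_directed_tree_def)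
  then have "rt \<in> V \<and> \<not> (\<exists>u. (u, rt) \<in> tree_edges V chi)"
    unfolding tree_root_def by (rule theI')
  then show "rt \<in> V" "u \<in> V \<Longrightarrow> rt \<notin> chi u" by (auto simp: tree_edges_def)
qed

lemma chi_pow_subset: "chi_pow chi n {rt} \<subseteq> V"
  by (induction n) (use root_in children_subset in auto)

lemma chi_pow_finite: "finite (chi_pow chi n {rt})"
  by (induction n) (use chi_pow_subset children_finite in auto)

text \<open>Walking an undirected path from the root, a step against an edge goes back to the unique
  parent, so every vertex lies in some generation \<open>Chi\<^sup>n(root)\<close>.\<close>

lemma in_some_generation:
  assumes "x \<in> V" shows "\<exists>n. x \<in> chi_pow chi n {rt}"
  using connected[OF root_in assms]
proof (induction rule: rtrancl_induct)
  case base
  then show ?case by (metis chi_pow.simps(1) singletonI)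
next
  case (step y z)
  then obtain n where n: "y \<in> chi_pow chi n {rt}" by blast
  from step(2) show ?case
  proof
    assume "(y, z) \<in> tree_edges V chi"
    then have "z \<in> chi_pow chi (Suc n) {rt}" using n by (auto simp: tree_edges_def)
    then show ?thesis by blast
  next
    assume "(y, z) \<in> (tree_edges V chi)\<inverse>"
    then have z: "z \<in> V" "y \<in> chi z" by (auto simp: tree_edges_def)
    show ?thesis
    proof (cases n)
      case 0
      then show ?thesis using n z root_not_child by simp
    next
      case (Suc m)
      then obtain u where u: "u \<in> chi_pow chi m {rt}" "y \<in> chi u" using n by auto
      have "u = z" using parent_unique[OF _ z(1) u(2) z(2)] u(1) chi_pow_subset by blast
      then show ?thesis using u by blast
    qed
  qed
qed

lemma generation_unique:
  "x \<in> chi_pow chi n {rt} \<Longrightarrow> x \<in> chi_pow chi m {rt} \<Longrightarrow> n = m"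
proof (induction n arbitrary: x m)
  case 0
  then show ?case using chi_pow_subset root_not_child by (cases m) auto
next
  case (Suc n)
  then obtain u where u: "u \<in> chi_pow chi n {rt}" "x \<in> chi u" by auto
  show ?case
  proof (cases m)
    case 0
    then show ?thesis using Suc.prems u chi_pow_subset root_not_child by auto
  next
    case (Suc m')
    then obtain u' where u': "u' \<in> chi_pow chi m' {rt}" "x \<in> chi u'" using Suc.prems by auto
    have "u = u'" using parent_unique[OF _ _ u(2) u'(2)] u(1) u'(1) chi_pow_subset by blast
    then show ?thesis using Suc.IH[OF u(1)] u'(1) Suc by simp
  qed
qed

lemma depth_eqI: "x \<in> chi_pow chi n {rt} \<Longrightarrow> depth x = n"
  unfolding tree_depth_def by (rule Least_equality) (use generation_unique in auto)

lemma in_generation_depth: "x \<in> V \<Longrightarrow> x \<in> chi_pow chi (depth x) {rt}"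
  using in_some_generation depth_eqI by metis

lemma depth_root: "depth rt = 0"
  by (rule depth_eqI) simp

lemma depth_child: "u \<in> V \<Longrightarrow> x \<in> chi u \<Longrightarrow> depth x = Suc (depth u)"
  by (rule depth_eqI) (use in_generation_depth in auto)

definition parent :: "'a \<Rightarrow> 'a" where
  "parent x = (THE u. u \<in> V \<and> x \<in> chi u)"

lemma parent_eq: "u \<in> V \<Longrightarrow> x \<in> chi u \<Longrightarrow> parent x = u"
  unfolding parent_def by (rule the_equality) (auto intro: parent_unique)

lemma parent_in:
  assumes "x \<in> V" "x \<noteq> rt"
  shows "parent x \<in> V \<and> x \<in> chi (parent x)"
proof -
  have "depth x \<noteq> 0" using in_generation_depth[OF assms(1)] assms(2) by (metis chi_pow.simps(1) singletonD)
  then obtain m where "x \<in> chi_pow chi (Suc m) {rt}"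
    using in_generation_depth[OF assms(1)] by (cases "depth x") auto
  then obtain u where "u \<in> chi_pow chi m {rt}" "x \<in> chi u" by auto
  then show ?thesis using chi_pow_subset parent_eq by blast
qed

lemma depth_parent: "x \<in> V \<Longrightarrow> x \<noteq> rt \<Longrightarrow> depth x = Suc (depth (parent x))"
  using parent_in depth_child by blast

lemma depth_levels_finite: "finite {x\<in>V. depth x \<le> L}"
proof (rule finite_subset)
  show "{x\<in>V. depth x \<le> L} \<subseteq> (\<Union>k\<le>L. chi_pow chi k {rt})"
    using in_generation_depth by auto
qed (auto intro: chi_pow_finite)

lemma branching_depth_bounded:
  assumes "branching_index V chi \<noteq> \<infinity>"
  shows "\<exists>M. \<forall>w\<in>{w\<in>V. card (chi w) \<ge> 2}. depth w \<le> M"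
proof (cases "{w\<in>V. card (chi w) \<ge> 2} = {}")
  case False
  define W where "W = {w\<in>V. card (chi w) \<ge> 2}"
  have "branching_index V chi = 1 + (SUP w\<in>W. enat (depth w))"
    using False unfolding branching_index_def Let_def W_def by simp
  then have "1 + (SUP w\<in>W. enat (depth w)) \<noteq> \<infinity>"
    using assms by simp
  then have "(SUP w\<in>W. enat (depth w)) \<noteq> \<infinity>" by (metis plus_enat_simps(3))
  then obtain M where M: "(SUP w\<in>W. enat (depth w)) = enat M"
    by (cases "SUP w\<in>W. enat (depth w)") auto
  have "depth w \<le> M" if "w \<in> W" for w
    using SUP_upper[OF that, of "\<lambda>w. enat (depth w)"] M by simp
  then show ?thesis unfolding W_def by blast
qed auto

lemma card_children_bounded:
  assumes "branching_index V chi \<noteq> \<infinity>"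
  shows "\<exists>K. \<forall>u\<in>V. card (chi u) \<le> K"
proof -
  obtain M where M: "\<forall>w\<in>V. card (chi w) \<ge> 2 \<longrightarrow> depth w \<le> M"
    using branching_depth_bounded[OF assms] by blast
  define A where "A = {x\<in>V. depth x \<le> M}"
  have "finite A" unfolding A_def by (rule depth_levels_finite)
  define K where "K = Max (insert 1 ((\<lambda>u. card (chi u)) ` A))"
  have "card (chi u) \<le> K" if "u \<in> V" for u
  proof (cases "u \<in> A")
    case True
    then show ?thesis unfolding K_def using \<open>finite A\<close> by (intro Max_ge) auto
  next
    case False
    then have "card (chi u) \<le> 1" using M that by (auto simp: A_def)
    also have "1 \<le> K" unfolding K_def using \<open>finite A\<close> by (intro Max_ge) auto
    finally show ?thesis .
  qed
  then show ?thesis by blast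
qed

end

lemma bounded_finite_family:
  fixes f :: "nat \<Rightarrow> 'a \<Rightarrow> nat"
  assumes "\<And>j. j < d \<Longrightarrow> \<exists>B. \<forall>x\<in>A j. f j x \<le> B"
  shows "\<exists>B. \<forall>j<d. \<forall>x\<in>A j. f j x \<le> B"
proof -
  obtain B where B: "\<And>j. j < d \<Longrightarrow> \<forall>x\<in>A j. f j x \<le> B j" using assms by metis
  have "f j x \<le> (\<Sum>k<d. B k)" if "j < d" "x \<in> A j" for j x
    using B[OF that(1)] that member_le_sum[of j "{..<d}" B] by fastforce
  then show ?thesis by blast
qed

section \<open>The directed Cartesian product and the weights\<close>

locale tree_product =
  fixes d :: nat and Vt :: "nat \<Rightarrow> 'a set" and ch :: "nat \<Rightarrow> 'a \<Rightarrow> 'a set" and a :: real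
  assumes trees: "\<And>j. j < d \<Longrightarrow> rooted_tree (Vt j) (ch j)" and a_pos: "a > 0"
begin

abbreviation "PV \<equiv> prod_V d Vt"
abbreviation "Chi \<equiv> prod_Chi d Vt ch"
abbreviation "dp j \<equiv> tree_depth (Vt j) (ch j)"
abbreviation "al v j \<equiv> alpha Vt ch v j"
abbreviation "lev \<equiv> alpha_abs d Vt ch"
abbreviation "lam \<equiv> weight_Ca d Vt ch a"

definition rt :: "nat \<Rightarrow> 'a" where
  "rt j = tree_root (Vt j) (ch j)"

definition pa :: "nat \<Rightarrow> 'a \<Rightarrow> 'a" where
  "pa j = rooted_tree.parent (Vt j) (ch j)"

definition nonroot :: "nat \<Rightarrow> (nat \<Rightarrow> 'a) set" where
  "nonroot j = {w \<in> PV. w j \<noteq> rt j}"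

definition par :: "nat \<Rightarrow> (nat \<Rightarrow> 'a) \<Rightarrow> (nat \<Rightarrow> 'a)" where
  "par j w = w(j := pa j (w j))"

lemma prod_V_iff: "v \<in> PV \<longleftrightarrow> (\<forall>k<d. v k \<in> Vt k) \<and> (\<forall>k. k \<ge> d \<longrightarrow> v k = undefined)"
  by (auto simp: prod_V_def PiE_iff extensional_def)

lemma fun_upd_in_prod_V: "v \<in> PV \<Longrightarrow> j < d \<Longrightarrow> y \<in> Vt j \<Longrightarrow> v(j := y) \<in> PV"
  by (auto simp: prod_V_iff)

lemma prod_V_component: "v \<in> PV \<Longrightarrow> j < d \<Longrightarrow> v j \<in> Vt j"
  by (auto simp: prod_V_iff)

lemma ch_subset: "j < d \<Longrightarrow> u \<in> Vt j \<Longrightarrow> ch j u \<subseteq> Vt j"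
  by (rule rooted_tree.children_subset[OF trees])

lemma pa_in: "j < d \<Longrightarrow> x \<in> Vt j \<Longrightarrow> x \<noteq> rt j \<Longrightarrow> pa j x \<in> Vt j \<and> x \<in> ch j (pa j x)"
  unfolding pa_def rt_def by (rule rooted_tree.parent_in[OF trees])

lemma pa_eq: "j < d \<Longrightarrow> u \<in> Vt j \<Longrightarrow> x \<in> ch j u \<Longrightarrow> pa j x = u"
  unfolding pa_def by (rule rooted_tree.parent_eq[OF trees])

lemma child_not_rt: "j < d \<Longrightarrow> u \<in> Vt j \<Longrightarrow> x \<in> ch j u \<Longrightarrow> x \<noteq> rt j"
  unfolding rt_def using rooted_tree.root_not_child[OF trees] by blast

lemma par_in: "j < d \<Longrightarrow> w \<in> nonroot j \<Longrightarrow> par j w \<in> PV"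
  unfolding par_def nonroot_def using pa_in fun_upd_in_prod_V prod_V_component by blast

lemma prod_Chi_iff:
  assumes j: "j < d" and v: "v \<in> PV"
  shows "w \<in> Chi j v \<longleftrightarrow> w \<in> nonroot j \<and> par j w = v"
proof
  assume w: "w \<in> Chi j v"
  then have "w \<in> PV" "w j \<in> ch j (v j)" "\<And>k. k \<noteq> j \<Longrightarrow> w k = v k"
    by (auto simp: prod_Chi_def)
  then show "w \<in> nonroot j \<and> par j w = v"
    using child_not_rt[OF j] pa_eq[OF j] prod_V_component[OF v j]
    by (auto simp: nonroot_def par_def fun_eq_iff)
next
  assume w: "w \<in> nonroot j \<and> par j w = v"
  then have "w j \<in> ch j (pa j (w j))"
    using pa_in[OF j prod_V_component[OF _ j]] by (auto simp: nonroot_def)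
  then show "w \<in> Chi j v" using w by (auto simp: prod_Chi_def nonroot_def par_def)
qed

lemma prod_Chi_eq_image:
  assumes j: "j < d" and v: "v \<in> PV"
  shows "Chi j v = (\<lambda>y. v(j := y)) ` ch j (v j)"
proof (intro set_eqI iffI)
  fix w assume "w \<in> Chi j v"
  then have "w j \<in> ch j (v j)" "w = v(j := w j)" by (auto simp: prod_Chi_def fun_eq_iff)
  then show "w \<in> (\<lambda>y. v(j := y)) ` ch j (v j)" by blast
next
  fix w assume "w \<in> (\<lambda>y. v(j := y)) ` ch j (v j)"
  then obtain y where y: "y \<in> ch j (v j)" "w = v(j := y)" by blast
  then have "y \<in> Vt j" using ch_subset[OF j prod_V_component[OF v j]] by blast
  then show "w \<in> Chi j v" using y fun_upd_in_prod_V[OF v j] by (auto simp: prod_Chi_def)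
qed

lemma inj_on_fun_upd: "inj_on (\<lambda>y. v(i := y)) A"
  by (rule inj_onI) (simp add: fun_eq_iff, metis)

lemma sum_prod_Chi:
  "i < d \<Longrightarrow> v \<in> PV \<Longrightarrow> (\<Sum>t\<in>Chi i v. g t) = (\<Sum>y\<in>ch i (v i). g (v(i := y)))"
  unfolding prod_Chi_eq_image by (rule sum.reindex[OF inj_on_fun_upd, unfolded o_def])

lemma card_prod_Chi: "j < d \<Longrightarrow> v \<in> PV \<Longrightarrow> card (Chi j v) = card (ch j (v j))"
  unfolding prod_Chi_eq_image by (rule card_image[OF inj_on_fun_upd])

lemma finite_prod_Chi: "j < d \<Longrightarrow> v \<in> PV \<Longrightarrow> finite (Chi j v)"
  using prod_Chi_eq_image rooted_tree.children_finite[OF trees] prod_V_component by simp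

lemma prod_Chi_subset: "Chi j v \<subseteq> PV"
  by (auto simp: prod_Chi_def)

lemma alpha_le_lev: "k < d \<Longrightarrow> al v k \<le> lev v"
  unfolding alpha_abs_def by (rule member_le_sum) auto

lemma alpha_add_le_lev: "i < d \<Longrightarrow> j < d \<Longrightarrow> i \<noteq> j \<Longrightarrow> al v i + al v j \<le> lev v"
proof -
  assume ij: "i < d" "j < d" "i \<noteq> j"
  have "al v i + al v j = (\<Sum>k\<in>{i, j}. al v k)" using ij by simp
  also have "\<dots> \<le> lev v" unfolding alpha_abs_def by (rule sum_mono2) (use ij in auto)
  finally show ?thesis .
qed

lemma alpha_par:
  assumes j: "j < d" and w: "w \<in> nonroot j"
  shows "al w j = Suc (al (par j w) j)" and "k \<noteq> j \<Longrightarrow> al (par j w) k = al w k"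
    and "lev w = Suc (lev (par j w))"
proof -
  have wj: "w j \<in> Vt j" "w j \<noteq> rt j" using w j prod_V_component by (auto simp: nonroot_def)
  show a1: "al w j = Suc (al (par j w) j)"
    using rooted_tree.depth_parent[OF trees[OF j] wj[unfolded rt_def]]
    by (simp add: alpha_def par_def pa_def)
  show a2: "k \<noteq> j \<Longrightarrow> al (par j w) k = al w k" for k by (simp add: alpha_def par_def)
  have "lev w = al w j + (\<Sum>k\<in>{..<d} - {j}. al w k)"
    using j by (simp add: alpha_abs_def sum.remove)
  also have "\<dots> = Suc (al (par j w) j + (\<Sum>k\<in>{..<d} - {j}. al (par j w) k))"
    using a1 a2 by simp
  also have "\<dots> = Suc (lev (par j w))"
    using j by (simp add: alpha_abs_def sum.remove)
  finally show "lev w = Suc (lev (par j w))" .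
qed

lemma lev_child: "j < d \<Longrightarrow> v \<in> PV \<Longrightarrow> t \<in> Chi j v \<Longrightarrow> lev t = Suc (lev v)"
  using prod_Chi_iff alpha_par(3) by metis

lemma lev_levels_finite: "finite {v\<in>PV. lev v \<le> L}"
proof (rule finite_subset)
  show "{v\<in>PV. lev v \<le> L} \<subseteq> PiE {..<d} (\<lambda>j. {x\<in>Vt j. dp j x \<le> L})"
  proof
    fix v assume v: "v \<in> {v\<in>PV. lev v \<le> L}"
    have "dp j (v j) \<le> L" if "j < d" for j
      using alpha_le_lev[OF that, of v] v by (simp add: alpha_def)
    then show "v \<in> PiE {..<d} (\<lambda>j. {x\<in>Vt j. dp j x \<le> L})"
      using v by (auto simp: prod_V_def PiE_iff)
  qed
  show "finite (PiE {..<d} (\<lambda>j. {x\<in>Vt j. dp j x \<le> L}))"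
    by (rule finite_PiE) (auto intro: rooted_tree.depth_levels_finite[OF trees])
qed

definition nch :: "nat \<Rightarrow> (nat \<Rightarrow> 'a) \<Rightarrow> real" where
  "nch j v = real (card (ch j (v j)))"

definition mu :: "nat \<Rightarrow> (nat \<Rightarrow> 'a) \<Rightarrow> real" where
  "mu j v = (real (al v j) + 1) / (real (lev v) + a)"

lemma weight_eq: "j < d \<Longrightarrow> v \<in> PV \<Longrightarrow> lam j v = complex_of_real (sqrt (mu j v / nch j v))"
proof -
  assume "j < d" "v \<in> PV"
  moreover have "1 / sqrt (nch j v) * sqrt (mu j v) = sqrt (mu j v / nch j v)"
    by (simp add: real_sqrt_divide)
  ultimately show ?thesis by (simp add: weight_Ca_def card_prod_Chi mu_def nch_def)
qed

lemma nch_ge_1: "j < d \<Longrightarrow> v \<in> PV \<Longrightarrow> nch j v \<ge> 1"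
  using rooted_tree.card_children_ge_1[OF trees] prod_V_component by (simp add: nch_def)

lemma mu_nonneg: "mu j v \<ge> 0"
  using a_pos by (simp add: mu_def)

lemma weight_mult_self: "j < d \<Longrightarrow> v \<in> PV \<Longrightarrow> lam j v * lam j v = complex_of_real (mu j v / nch j v)"
  using weight_eq[of j v] mu_nonneg[of j v] nch_ge_1[of j v]
  by (simp flip: of_real_mult)

lemma mu_le: "j < d \<Longrightarrow> mu j v \<le> 1 + 1 / a"
proof -
  assume j: "j < d"
  have "real (al v j) + 1 \<le> (1 + 1 / a) * (real (lev v) + a)"
  proof -
    have "(1 + 1 / a) * (real (lev v) + a) = real (lev v) + a + real (lev v) / a + 1"
      using a_pos by (simp add: field_simps)
    moreover have "real (lev v) / a \<ge> 0" using a_pos by simp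
    ultimately show ?thesis using alpha_le_lev[OF j, of v] a_pos by linarith
  qed
  then show ?thesis using a_pos by (simp add: mu_def divide_le_eq)
qed

lemma parent_shift_multishift: "j < d \<Longrightarrow> parent_shift PV (nonroot j) (par j) (lam j) (1 + 1 / a)"
proof unfold_locales
  assume j: "j < d"
  fix v assume v: "v \<in> PV"
  have fibre: "{w \<in> nonroot j. par j w = v} = Chi j v" using prod_Chi_iff[OF j v] by blast
  show "finite {w \<in> nonroot j. par j w = v}" unfolding fibre by (rule finite_prod_Chi[OF j v])
  have "real (card (Chi j v)) * (cmod (lam j v))\<^sup>2 = mu j v"
    using weight_eq[OF j v] nch_ge_1[OF j v] mu_nonneg[of j v] card_prod_Chi[OF j v]
    by (simp add: nch_def)
  then show "real (card {w \<in> nonroot j. par j w = v}) * (cmod (lam j v))\<^sup>2 \<le> 1 + 1 / a"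
    unfolding fibre using mu_le[OF j, of v] by simp
qed (use par_in a_pos in \<open>auto simp: nonroot_def\<close>)

end

lemma inverse_shift_le:
  fixes n a :: real assumes n: "n \<ge> 1" and a: "a > 0"
  shows "1 / (n - 1 + a) \<le> (1 + 1 / a) / (n + a)"
proof -
  have "(1 + 1 / a) * (n - 1 + a) = n - 1 + a + (n - 1) / a + 1" using a by (simp add: field_simps)
  moreover have "(n - 1) / a \<ge> 0" using n a by simp
  ultimately have "n + a \<le> (1 + 1 / a) * (n - 1 + a)" by linarith
  moreover have "n - 1 + a > 0" "n + a > 0" using n a by linarith+
  ultimately show ?thesis by (simp add: field_simps)
qed

lemma level_fraction_diff_le:
  fixes n a \<alpha> :: real assumes n: "n \<ge> 1" and a: "a > 0" and \<alpha>: "0 \<le> \<alpha>" "\<alpha> \<le> n"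
  shows "\<bar>(\<alpha> + 1) / (n + a) - \<alpha> / (n - 1 + a)\<bar> \<le> (1 + 2 / a) / (n + a)"
proof -
  have p: "n - 1 + a > 0" "n + a > 0" using n a by linarith+
  have "(\<alpha> + 1) / (n + a) - \<alpha> / (n - 1 + a) = (n - 1 + a - \<alpha>) / ((n + a) * (n - 1 + a))"
    using p by (simp add: field_simps)
  then have "\<bar>(\<alpha> + 1) / (n + a) - \<alpha> / (n - 1 + a)\<bar> = \<bar>n - 1 + a - \<alpha>\<bar> / ((n + a) * (n - 1 + a))"
    using p by (simp add: abs_divide)
  also have "\<dots> \<le> (n + a + 1) / ((n + a) * (n - 1 + a))"
    using \<alpha> a n p by (intro divide_right_mono) auto
  also have "\<dots> = (1 + 2 / (n - 1 + a)) / (n + a)" using p by (simp add: field_simps)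
  also have "\<dots> \<le> (1 + 2 / a) / (n + a)"
    using p a n by (intro divide_right_mono add_left_mono divide_left_mono) auto
  finally show ?thesis .
qed

lemma sqrt_level_product_diff_le:
  fixes n a A B ci cj :: real
  assumes n: "n \<ge> 1" and a: "a > 0" and AB: "A \<ge> 0" "B \<ge> 0" "A + B \<le> n + 1"
    and c: "ci \<ge> 1" "cj \<ge> 1"
  shows "\<bar>sqrt (A / (n + a) / ci) * sqrt (B / (n + a) / cj) -
           sqrt (B / (n - 1 + a) / cj) * sqrt (A / (n - 1 + a) / ci)\<bar> \<le> (1 + 2 / a) / (n + a)"
proof -
  have p: "n - 1 + a > 0" "n + a > 0" using n a by linarith+
  define s where "s = sqrt (A * B / (ci * cj))"
  have sqrt_prod: "sqrt (A / m / ci) * sqrt (B / m / cj) = s / m" if "m > 0" for m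
  proof -
    have "sqrt (A / m / ci) * sqrt (B / m / cj) = sqrt (A * B / (ci * cj) / m\<^sup>2)"
      by (simp add: real_sqrt_mult[symmetric] field_simps power2_eq_square)
    also have "\<dots> = sqrt (A * B / (ci * cj)) / sqrt (m\<^sup>2)" by (rule real_sqrt_divide)
    also have "\<dots> = s / m" using that by (simp add: s_def)
    finally show ?thesis .
  qed
  have s: "0 \<le> s" "s \<le> n + 1"
  proof -
    have "ci * cj \<ge> 1" using c by (metis mult_mono' mult_1 zero_le_one)
    moreover have "A * B \<ge> 0" using AB by simp
    ultimately have "A * B / (ci * cj) \<le> A * B"
      by (simp add: divide_le_eq mult_le_cancel_left1 mult.commute)
    also have "A * B \<le> (n + 1)\<^sup>2"
      using AB by (simp add: power2_eq_square mult_mono)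
    finally show "s \<le> n + 1" unfolding s_def using n by (simp add: real_le_lsqrt)
  qed (use AB c in \<open>simp add: s_def\<close>)
  have "s / (n + a) - s / (n - 1 + a) = - (s / ((n + a) * (n - 1 + a)))"
    using p by (simp add: field_simps)
  then have "\<bar>s / (n + a) - s / (n - 1 + a)\<bar> = s / ((n + a) * (n - 1 + a))"
    using p s by simp
  also have "\<dots> \<le> (n + 1) / ((n + a) * (n - 1 + a))"
    using s p by (intro divide_right_mono) auto
  also have "\<dots> = ((n + 1) / (n - 1 + a)) / (n + a)" by (simp add: field_simps)
  also have "\<dots> \<le> (1 + 2 / a) / (n + a)"
  proof -
    have "(1 + 2 / a) * (n - 1 + a) = n + 1 + a + 2 * (n - 1) / a" using a by (simp add: field_simps)
    moreover have "2 * (n - 1) / a \<ge> 0" using n a by simp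
    ultimately have "(n + 1) / (n - 1 + a) \<le> 1 + 2 / a" using p a by (simp add: divide_le_eq)
    then show ?thesis using p by (intro divide_right_mono) auto
  qed
  finally show ?thesis
    using sqrt_prod[OF p(2)] sqrt_prod[OF p(1)] by (simp add: mult.commute)
qed

section \<open>The commutators \<open>S\<^sub>i\<^sup>* S\<^sub>j - S\<^sub>j S\<^sub>i\<^sup>*\<close>\<close>

context tree_product
begin

abbreviation S :: "nat \<Rightarrow> ((nat \<Rightarrow> 'a) \<Rightarrow> complex) \<Rightarrow> (nat \<Rightarrow> 'a) \<Rightarrow> complex" where
  "S j \<equiv> parent_shift.pshift (nonroot j) (par j) (lam j)"

abbreviation S_adj :: "nat \<Rightarrow> ((nat \<Rightarrow> 'a) \<Rightarrow> complex) \<Rightarrow> (nat \<Rightarrow> 'a) \<Rightarrow> complex" where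
  "S_adj i \<equiv> parent_shift.pshift_adj PV (nonroot i) (par i) (lam i)"

lemma S_apply: "j < d \<Longrightarrow> S j f w = (if w \<in> nonroot j then lam j (par j w) * f (par j w) else 0)"
  by (simp add: parent_shift.pshift_def[OF parent_shift_multishift])

lemma multishift_eq_pshift: "j < d \<Longrightarrow> multishift d Vt ch lam j = S j"
proof (intro ext)
  fix f w assume j: "j < d"
  have "{v \<in> PV. w \<in> Chi j v} = (if w \<in> nonroot j then {par j w} else {})"
    using prod_Chi_iff[OF j] par_in[OF j] by auto
  then show "multishift d Vt ch lam j f w = S j f w"
    unfolding S_apply[OF j] by (auto simp: multishift_def nonroot_def)
qed

lemma S_adj_apply:
  assumes i: "i < d" and v: "v \<in> PV"
  shows "S_adj i g v = lam i v * (\<Sum>w\<in>Chi i v. g w)"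
proof -
  have "{w \<in> nonroot i. par i w = v} = Chi i v" using prod_Chi_iff[OF i v] by blast
  then show ?thesis
    using weight_eq[OF i v] v
    by (simp add: parent_shift.pshift_adj_def[OF parent_shift_multishift[OF i]]
        parent_shift.fibre_def[OF parent_shift_multishift[OF i]])
qed

lemma S_outside: "j < d \<Longrightarrow> w \<notin> PV \<Longrightarrow> S j f w = 0"
  unfolding S_apply by (simp add: nonroot_def)

lemma S_adj_outside: "i < d \<Longrightarrow> v \<notin> PV \<Longrightarrow> S_adj i g v = 0"
  by (simp add: parent_shift.pshift_adj_def[OF parent_shift_multishift])

definition comm :: "nat \<Rightarrow> nat \<Rightarrow> ((nat \<Rightarrow> 'a) \<Rightarrow> complex) \<Rightarrow> (nat \<Rightarrow> 'a) \<Rightarrow> complex" where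
  "comm i j f = (\<lambda>x. S_adj i (S j f) x - S j (S_adj i f) x)"

lemma comm_diag_apply:
  assumes j: "j < d" and x: "x \<in> PV"
  shows "comm j j f x = complex_of_real (mu j x) * f x -
     (if x \<in> nonroot j
      then complex_of_real (mu j (par j x) / nch j (par j x)) * (\<Sum>t\<in>Chi j (par j x). f t) else 0)"
proof -
  have "(\<Sum>w\<in>Chi j x. S j f w) = of_nat (card (Chi j x)) * (lam j x * f x)"
    using prod_Chi_iff[OF j x] by (simp add: S_apply[OF j])
  then have "S_adj j (S j f) x = complex_of_real (nch j x) * (lam j x * lam j x) * f x"
    using card_prod_Chi[OF j x] by (simp add: S_adj_apply[OF j x] nch_def mult_ac)
  also have "\<dots> = complex_of_real (nch j x * (mu j x / nch j x)) * f x"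
    by (simp add: weight_mult_self[OF j x])
  also have "nch j x * (mu j x / nch j x) = mu j x" using nch_ge_1[OF j x] by simp
  finally have "S_adj j (S j f) x = complex_of_real (mu j x) * f x" .
  moreover have "S j (S_adj j f) x = (if x \<in> nonroot j then complex_of_real (mu j (par j x) / nch j (par j x)) *
      (\<Sum>t\<in>Chi j (par j x). f t) else 0)"
    using par_in[OF j, of x]
    by (simp add: S_apply[OF j] S_adj_apply[OF j] weight_mult_self[OF j] mult.assoc[symmetric])
  ultimately show ?thesis by (simp add: comm_def)
qed

lemma commuting_square:
  assumes i: "i < d" and j: "j < d" and ij: "i \<noteq> j" and x: "x \<in> nonroot j" and y: "y \<in> ch i (x i)"
  defines "px \<equiv> par j x"
  shows "x(i := y) \<in> nonroot j" and "par j (x(i := y)) = px(i := y)"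
    and "px(i := y) \<in> PV" and "lev (px(i := y)) = lev x"
    and "al (px(i := y)) i = Suc (al x i)" and "al (px(i := y)) j = al px j"
    and "al px i = al x i" and "nch i px = nch i x" and "nch j (px(i := y)) = nch j px"
proof -
  have xV: "x \<in> PV" and xj: "x j \<noteq> rt j" using x by (auto simp: nonroot_def)
  have pxV: "px \<in> PV" using par_in[OF j x] by (simp add: px_def)
  have pxi: "px i = x i" using ij by (simp add: px_def par_def)
  have yV: "y \<in> Vt i" using ch_subset[OF i prod_V_component[OF xV i]] y by blast
  show "x(i := y) \<in> nonroot j" using fun_upd_in_prod_V[OF xV i yV] xj ij by (simp add: nonroot_def)
  show "par j (x(i := y)) = px(i := y)" using ij by (auto simp: par_def px_def fun_eq_iff)
  show "px(i := y) \<in> PV" using fun_upd_in_prod_V[OF pxV i yV] .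
  have "px(i := y) \<in> Chi i px" unfolding prod_Chi_eq_image[OF i pxV] using y pxi by auto
  then show "lev (px(i := y)) = lev x"
    using lev_child[OF i pxV] alpha_par(3)[OF j x] by (simp add: px_def)
  show "al (px(i := y)) i = Suc (al x i)"
    using rooted_tree.depth_child[OF trees[OF i] prod_V_component[OF xV i] y] by (simp add: alpha_def)
  show "al (px(i := y)) j = al px j" using ij by (simp add: alpha_def)
  show "al px i = al x i" "nch i px = nch i x" using pxi by (simp_all add: alpha_def nch_def)
  show "nch j (px(i := y)) = nch j px" using ij by (simp add: nch_def)
qed

lemma comm_offdiag_apply:
  assumes i: "i < d" and j: "j < d" and ij: "i \<noteq> j" and x: "x \<in> PV"
  shows "comm i j f x = (if x \<in> nonroot j then
     (\<Sum>y\<in>ch i (x i). (lam i x * lam j ((par j x)(i := y)) - lam j (par j x) * lam i (par j x)) *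
        f ((par j x)(i := y)))
     else 0)"
proof (cases "x \<in> nonroot j")
  case False
  then have "x(i := y) \<notin> nonroot j" for y using ij x by (auto simp: nonroot_def)
  then show ?thesis
    using False by (simp add: comm_def S_adj_apply[OF i x] sum_prod_Chi[OF i x] S_apply[OF j])
next
  case True
  define px where "px = par j x"
  have pxV: "px \<in> PV" using par_in[OF j True] by (simp add: px_def)
  have "S_adj i (S j f) x = (\<Sum>y\<in>ch i (x i). lam i x * lam j (px(i := y)) * f (px(i := y)))"
    using commuting_square(1,2)[OF i j ij True]
    by (simp add: S_adj_apply[OF i x] sum_prod_Chi[OF i x] S_apply[OF j] sum_distrib_left mult.assoc px_def)
  moreover have "S j (S_adj i f) x = (\<Sum>y\<in>ch i (x i). lam j px * lam i px * f (px(i := y)))"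
  proof -
    have "px i = x i" using ij by (simp add: px_def par_def)
    then show ?thesis
      using True by (simp add: S_apply[OF j] px_def[symmetric] S_adj_apply[OF i pxV]
          sum_prod_Chi[OF i pxV] sum_distrib_left mult.assoc)
  qed
  ultimately show ?thesis
    using True by (simp add: comm_def px_def sum_subtractf[symmetric] left_diff_distrib)
qed

text \<open>The vertices whose values enter \<open>comm i j f x\<close>.\<close>

definition nbhd :: "nat \<Rightarrow> nat \<Rightarrow> (nat \<Rightarrow> 'a) \<Rightarrow> (nat \<Rightarrow> 'a) set" where
  "nbhd i j x = insert x (if x \<in> nonroot j then Chi i (par j x) else {})"

definition commutator_const :: "nat \<Rightarrow> real" where
  "commutator_const B = 2 * (real B + 2) * (1 + 1 / a)"

lemma commutator_const_ge: "1 + 2 / a \<le> commutator_const B"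
proof -
  have "1 + 2 / a \<le> 2 * 2 * (1 + 1 / a)" using a_pos by (simp add: field_simps)
  also have "\<dots> \<le> commutator_const B"
    unfolding commutator_const_def using a_pos by (intro mult_right_mono) auto
  finally show ?thesis .
qed

lemma lev_ge_1: "j < d \<Longrightarrow> x \<in> nonroot j \<Longrightarrow> real (lev x) \<ge> 1"
  using alpha_par(3) by simp

lemma mu_par: "j < d \<Longrightarrow> x \<in> nonroot j \<Longrightarrow> mu j (par j x) = real (al x j) / (real (lev x) - 1 + a)"
  using alpha_par(1,3) by (simp add: mu_def)

lemma mu_diff_par_le:
  assumes j: "j < d" and x: "x \<in> nonroot j"
  shows "\<bar>mu j x - mu j (par j x)\<bar> \<le> (1 + 2 / a) / (real (lev x) + a)"
  unfolding mu_par[OF j x] unfolding mu_def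
  using level_fraction_diff_le[OF lev_ge_1[OF j x] a_pos, of "real (al x j)"] alpha_le_lev[OF j, of x]
  by simp

lemma mu_add_par_le:
  assumes j: "j < d" and x: "x \<in> nonroot j" and B: "al x j \<le> B + 1"
  shows "mu j x + mu j (par j x) \<le> commutator_const B / (real (lev x) + a)"
proof -
  define n where "n = real (lev x)"
  have n: "n \<ge> 1" "n + a > 0" using lev_ge_1[OF j x] a_pos by (auto simp: n_def)
  have "mu j x \<le> (real B + 2) / (n + a)"
    using B n by (simp add: mu_def n_def divide_right_mono)
  moreover have "mu j (par j x) \<le> (real B + 1) * ((1 + 1 / a) / (n + a))"
    unfolding mu_par[OF j x] n_def[symmetric]
    using inverse_shift_le[OF n(1) a_pos] B n(1) a_pos
    by (simp add: divide_inverse mult_mono)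
  ultimately have "mu j x + mu j (par j x) \<le>
      (real B + 2) / (n + a) + (real B + 1) * (1 + 1 / a) / (n + a)"
    unfolding times_divide_eq_right by linarith
  also have "\<dots> = ((real B + 2) + (real B + 1) * (1 + 1 / a)) / (n + a)"
    by (rule add_divide_distrib[symmetric])
  also have "\<dots> \<le> commutator_const B / (n + a)"
  proof (rule divide_right_mono)
    show "(real B + 2) + (real B + 1) * (1 + 1 / a) \<le> commutator_const B"
      using a_pos by (simp add: commutator_const_def field_simps)
  qed (use n in auto)
  finally show ?thesis by (simp add: n_def)
qed

lemma comm_diag_root:
  assumes j: "j < d" and x: "x \<in> PV" "x \<notin> nonroot j"
  shows "cmod (comm j j f x) = 1 / (real (lev x) + a) * cmod (f x)"
proof -
  have "al x j = 0"
    using x rooted_tree.depth_root[OF trees[OF j]] by (simp add: nonroot_def alpha_def rt_def)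
  then have mu: "mu j x = 1 / (real (lev x) + a)" by (simp add: mu_def)
  have "cmod (comm j j f x) = mu j x * cmod (f x)"
    using comm_diag_apply[OF j x(1), of f] x(2) mu_nonneg[of j x] by (simp add: norm_mult)
  then show ?thesis unfolding mu .
qed

lemma comm_diag_only_child:
  assumes j: "j < d" and x: "x \<in> nonroot j" and only: "nch j (par j x) = 1"
  shows "cmod (comm j j f x) \<le> (1 + 2 / a) / (real (lev x) + a) * cmod (f x)"
proof -
  have pxV: "par j x \<in> PV" using par_in[OF j x] .
  have "x \<in> Chi j (par j x)" using prod_Chi_iff[OF j pxV] x by simp
  moreover have "card (Chi j (par j x)) = 1" using only card_prod_Chi[OF j pxV] by (simp add: nch_def)
  ultimately have "Chi j (par j x) = {x}" by (metis card_1_singletonE singletonD)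
  then have "cmod (comm j j f x) = \<bar>mu j x - mu j (par j x)\<bar> * cmod (f x)"
    using comm_diag_apply[OF j _, of x f] x only
    by (simp add: nonroot_def norm_mult flip: left_diff_distrib of_real_diff)
  also have "\<dots> \<le> (1 + 2 / a) / (real (lev x) + a) * cmod (f x)"
    using mu_diff_par_le[OF j x] by (intro mult_right_mono) auto
  finally show ?thesis .
qed

lemma comm_diag_branching:
  assumes j: "j < d" and x: "x \<in> nonroot j" and B: "al x j \<le> B + 1"
  shows "cmod (comm j j f x) \<le>
    commutator_const B / (real (lev x) + a) * (\<Sum>t\<in>Chi j (par j x). cmod (f t))"
proof -
  define px where "px = par j x"
  define P where "P = Chi j px"
  define S where "S = (\<Sum>t\<in>P. cmod (f t))"
  have pxV: "px \<in> PV" using par_in[OF j x] by (simp add: px_def)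
  have nch: "nch j px \<ge> 1" using nch_ge_1[OF j pxV] .
  have "x \<in> P" "finite P"
    using prod_Chi_iff[OF j pxV] x finite_prod_Chi[OF j pxV] by (auto simp: P_def px_def)
  then have fx: "cmod (f x) \<le> S" unfolding S_def by (intro member_le_sum) auto
  have "cmod (comm j j f x) \<le> cmod (complex_of_real (mu j x) * f x) +
      cmod (complex_of_real (mu j px / nch j px) * (\<Sum>t\<in>P. f t))"
    using comm_diag_apply[OF j _, of x f] x by (simp add: nonroot_def px_def P_def norm_triangle_ineq4)
  also have "\<dots> = mu j x * cmod (f x) + mu j px / nch j px * cmod (\<Sum>t\<in>P. f t)"
    using mu_nonneg[of j x] mu_nonneg[of j px] nch by (simp add: norm_mult norm_divide)
  also have "\<dots> \<le> mu j x * S + mu j px * S"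
  proof (intro add_mono mult_mono)
    show "mu j px / nch j px \<le> mu j px"
      using nch mu_nonneg[of j px] by (simp add: divide_le_eq mult_le_cancel_left1)
  qed (use fx in \<open>auto simp: S_def norm_sum mu_nonneg intro: sum_nonneg\<close>)
  also have "\<dots> = (mu j x + mu j px) * S" by (simp add: distrib_right)
  also have "\<dots> \<le> commutator_const B / (real (lev x) + a) * S"
    using mu_add_par_le[OF j x B] by (intro mult_right_mono) (auto simp: px_def S_def sum_nonneg)
  finally show ?thesis by (simp add: S_def P_def px_def)
qed

lemma comm_diag_bound:
  assumes j: "j < d" and x: "x \<in> PV"
    and B: "\<forall>u\<in>Vt j. card (ch j u) \<ge> 2 \<longrightarrow> dp j u \<le> B"
  shows "cmod (comm j j f x) \<le> commutator_const B / (real (lev x) + a) * (\<Sum>t\<in>nbhd j j x. cmod (f t))"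
proof -
  have "0 \<le> 2 / a" using a_pos by simp
  then have C: "1 \<le> commutator_const B"
    using commutator_const_ge[of B] by linarith
  have C': "(1 + 2 / a) / (real (lev x) + a) \<le> commutator_const B / (real (lev x) + a)"
    using commutator_const_ge[of B] a_pos by (simp add: divide_right_mono)
  show ?thesis
  proof (cases "x \<in> nonroot j")
    case False
    have "1 / (real (lev x) + a) * cmod (f x) \<le> commutator_const B / (real (lev x) + a) * cmod (f x)"
      using C a_pos by (intro mult_right_mono divide_right_mono) auto
    then show ?thesis using comm_diag_root[OF j x False] False by (simp add: nbhd_def)
  next
    case True
    have pxV: "par j x \<in> PV" using par_in[OF j True] .
    have nbhd: "nbhd j j x = Chi j (par j x)" using True prod_Chi_iff[OF j pxV] by (auto simp: nbhd_def)
    show ?thesis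
    proof (cases "nch j (par j x) = 1")
      case True
      have "x \<in> Chi j (par j x)" using prod_Chi_iff[OF j pxV] \<open>x \<in> nonroot j\<close> by simp
      then have "cmod (f x) \<le> (\<Sum>t\<in>nbhd j j x. cmod (f t))"
        unfolding nbhd using finite_prod_Chi[OF j pxV] by (intro member_le_sum) auto
      moreover have "0 \<le> commutator_const B / (real (lev x) + a)"
        using C a_pos by simp
      ultimately have "(1 + 2 / a) / (real (lev x) + a) * cmod (f x) \<le>
          commutator_const B / (real (lev x) + a) * (\<Sum>t\<in>nbhd j j x. cmod (f t))"
        using C' by (intro mult_mono) auto
      then show ?thesis
        using comm_diag_only_child[OF j \<open>x \<in> nonroot j\<close> True, of f] by linarith
    next
      case False
      then have "card (ch j (par j x j)) \<ge> 2"
        using nch_ge_1[OF j pxV] by (simp add: nch_def)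
      then have "al (par j x) j \<le> B" using B prod_V_component[OF pxV j] by (simp add: alpha_def)
      then have "al x j \<le> B + 1" using alpha_par(1)[OF j True] by simp
      then show ?thesis using comm_diag_branching[OF j True] nbhd by simp
    qed
  qed
qed

lemma weight_commutator_le:
  assumes i: "i < d" and j: "j < d" and ij: "i \<noteq> j" and x: "x \<in> nonroot j" and y: "y \<in> ch i (x i)"
  defines "px \<equiv> par j x"
  shows "cmod (lam i x * lam j (px(i := y)) - lam j px * lam i px) \<le> (1 + 2 / a) / (real (lev x) + a)"
proof -
  note sq = commuting_square[OF i j ij x y, folded px_def]
  have xV: "x \<in> PV" and pxV: "px \<in> PV" using x par_in[OF j x] by (auto simp: nonroot_def px_def)
  define n where "n = real (lev x)"
  define A where "A = real (al x i) + 1"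
  define B where "B = real (al x j)"
  have AB: "A \<ge> 0" "B \<ge> 0" "A + B \<le> n + 1"
    using alpha_add_le_lev[OF i j ij, of x] by (auto simp: A_def B_def n_def)
  have "mu i x = A / (n + a)" "mu j (px(i := y)) = B / (n + a)"
    using sq(4,6) alpha_par(1)[OF j x] by (simp_all add: mu_def A_def B_def n_def px_def)
  moreover have "mu j px = B / (n - 1 + a)" "mu i px = A / (n - 1 + a)"
    using mu_par[OF j x] sq(7) alpha_par(3)[OF j x] by (simp_all add: mu_def A_def B_def n_def px_def)
  ultimately have "lam i x * lam j (px(i := y)) - lam j px * lam i px = complex_of_real
     (sqrt (A / (n + a) / nch i x) * sqrt (B / (n + a) / nch j px) -
      sqrt (B / (n - 1 + a) / nch j px) * sqrt (A / (n - 1 + a) / nch i x))"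
    using weight_eq[OF i xV] weight_eq[OF j sq(3)] weight_eq[OF j pxV] weight_eq[OF i pxV] sq(8,9)
    by simp
  then have "cmod (lam i x * lam j (px(i := y)) - lam j px * lam i px) =
     \<bar>sqrt (A / (n + a) / nch i x) * sqrt (B / (n + a) / nch j px) -
      sqrt (B / (n - 1 + a) / nch j px) * sqrt (A / (n - 1 + a) / nch i x)\<bar>"
    by (simp only: norm_of_real)
  then show ?thesis
    using sqrt_level_product_diff_le[OF lev_ge_1[OF j x, folded n_def] a_pos AB nch_ge_1[OF i xV]
        nch_ge_1[OF j pxV]]
    by (simp add: n_def)
qed

lemma comm_offdiag_bound:
  assumes i: "i < d" and j: "j < d" and ij: "i \<noteq> j" and x: "x \<in> PV"
  shows "cmod (comm i j f x) \<le> (1 + 2 / a) / (real (lev x) + a) * (\<Sum>t\<in>nbhd i j x. cmod (f t))"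
proof (cases "x \<in> nonroot j")
  case True
  define px where "px = par j x"
  define \<delta> where "\<delta> = (1 + 2 / a) / (real (lev x) + a)"
  have pxV: "px \<in> PV" using par_in[OF j True] by (simp add: px_def)
  have "cmod (comm i j f x) \<le>
      (\<Sum>y\<in>ch i (x i). cmod ((lam i x * lam j (px(i := y)) - lam j px * lam i px) * f (px(i := y))))"
    using comm_offdiag_apply[OF i j ij x, of f] True by (simp add: norm_sum px_def)
  also have "\<dots> \<le> (\<Sum>y\<in>ch i (x i). \<delta> * cmod (f (px(i := y))))"
  proof (intro sum_mono)
    fix y assume "y \<in> ch i (x i)"
    then have "cmod (lam i x * lam j (px(i := y)) - lam j px * lam i px) \<le> \<delta>"
      using weight_commutator_le[OF i j ij True] unfolding \<delta>_def px_def by blast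
    then show "cmod ((lam i x * lam j (px(i := y)) - lam j px * lam i px) * f (px(i := y))) \<le>
        \<delta> * cmod (f (px(i := y)))"
      by (simp add: norm_mult mult_right_mono)
  qed
  also have "\<dots> = \<delta> * (\<Sum>t\<in>Chi i px. cmod (f t))"
    using commuting_square(7)[OF i j ij True] sum_prod_Chi[OF i pxV, of "\<lambda>t. cmod (f t)"] ij
    by (simp add: sum_distrib_left px_def par_def)
  also have "\<dots> \<le> \<delta> * (\<Sum>t\<in>nbhd i j x. cmod (f t))"
    using True finite_prod_Chi[OF i pxV] a_pos
    by (intro mult_left_mono sum_mono2) (auto simp: nbhd_def px_def \<delta>_def)
  finally show ?thesis by (simp add: \<delta>_def)
next
  case False
  have "0 \<le> (1 + 2 / a) / (real (lev x) + a) * (\<Sum>t\<in>nbhd i j x. cmod (f t))"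
    using a_pos by (simp add: sum_nonneg)
  then show ?thesis using False by (simp add: comm_offdiag_apply[OF i j ij x])
qed

lemma nbhd_finite_card:
  assumes i: "i < d" and j: "j < d" and x: "x \<in> PV" and K: "\<forall>u\<in>Vt i. card (ch i u) \<le> K"
  shows "finite (nbhd i j x) \<and> nbhd i j x \<subseteq> PV \<and> card (nbhd i j x) \<le> K + 1"
proof (cases "x \<in> nonroot j")
  case True
  then have "par j x \<in> PV" by (rule par_in[OF j])
  then have "finite (Chi i (par j x))" "card (Chi i (par j x)) \<le> K"
    using finite_prod_Chi[OF i] card_prod_Chi[OF i] K prod_V_component[OF _ i] by auto
  then show ?thesis
    using True x prod_Chi_subset[of i "par j x"] by (auto simp: nbhd_def card_insert_if)
qed (use x in \<open>auto simp: nbhd_def\<close>)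

lemma lev_nbhd: "i < d \<Longrightarrow> j < d \<Longrightarrow> t \<in> nbhd i j x \<Longrightarrow> lev t = lev x"
  using lev_child[OF _ par_in] alpha_par(3) by (auto simp: nbhd_def split: if_splits)

lemma nbhd_preimage_subset:
  assumes i: "i < d" and j: "j < d"
  shows "{x\<in>PV. t \<in> nbhd i j x} \<subseteq> nbhd j i t"
proof
  fix x assume "x \<in> {x\<in>PV. t \<in> nbhd i j x}"
  then have x: "x \<in> PV" and t: "t \<in> nbhd i j x" by auto
  show "x \<in> nbhd j i t"
  proof (cases "x = t")
    case False
    then have xj: "x \<in> nonroot j" and tC: "t \<in> Chi i (par j x)"
      using t by (auto simp: nbhd_def split: if_splits)
    have "t \<in> nonroot i" "par i t = par j x"
      using prod_Chi_iff[OF i par_in[OF j xj]] tC by auto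
    then have "x \<in> Chi j (par i t)"
      using prod_Chi_iff[OF j par_in[OF j xj]] xj by simp
    then show ?thesis using \<open>t \<in> nonroot i\<close> by (simp add: nbhd_def)
  qed (simp add: nbhd_def)
qed

lemma comm_linear: "i < d \<Longrightarrow> j < d \<Longrightarrow> linear_op PV (comm i j)"
  unfolding comm_def
  by (intro linear_op_commutator parent_shift.pshift_adj_linear[OF parent_shift_multishift]
      parent_shift.pshift_linear[OF parent_shift_multishift])

lemma comm_compact:
  assumes branching: "\<forall>j<d. branching_index (Vt j) (ch j) \<noteq> \<infinity>" and i: "i < d" and j: "j < d"
  shows "compact_operator_ell2 PV (comm i j)"
proof -
  obtain K where K: "\<forall>k<d. \<forall>u\<in>Vt k. card (ch k u) \<le> K"
    using bounded_finite_family[of d Vt "\<lambda>k u. card (ch k u)"]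
      rooted_tree.card_children_bounded[OF trees] branching by blast
  obtain B where B: "\<forall>k<d. \<forall>u\<in>{u\<in>Vt k. card (ch k u) \<ge> 2}. dp k u \<le> B"
    using bounded_finite_family[of d "\<lambda>k. {u\<in>Vt k. card (ch k u) \<ge> 2}" dp]
      rooted_tree.branching_depth_bounded[OF trees] branching by blast
  show ?thesis
  proof (rule compact_operator_ell2_local_decay[where N = "nbhd i j" and K = "K + 1"
        and \<delta> = "\<lambda>n. commutator_const B / (real n + a)"])
    show "linear_op PV (comm i j)" using comm_linear[OF i j] .
    show "finite {x\<in>PV. lev x \<le> L}" for L by (rule lev_levels_finite)
    show "comm i j f x = 0" if "x \<notin> PV" for f x
      using that by (simp add: comm_def S_adj_outside[OF i] S_outside[OF j])
    show "finite (nbhd i j x) \<and> nbhd i j x \<subseteq> PV \<and> card (nbhd i j x) \<le> K + 1" if "x \<in> PV" for x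
      using nbhd_finite_card[OF i j that] K i by blast
    show "lev t \<le> lev x" if "t \<in> nbhd i j x" for x t using lev_nbhd[OF i j that] by simp
    show "finite {x\<in>PV. t \<in> nbhd i j x} \<and> card {x\<in>PV. t \<in> nbhd i j x} \<le> K + 1" if "t \<in> PV" for t
      using nbhd_finite_card[OF j i that] K j nbhd_preimage_subset[OF i j, of t]
      by (meson card_mono finite_subset order_trans)
    show "cmod (comm i j f x) \<le> commutator_const B / (real (lev x) + a) * (\<Sum>t\<in>nbhd i j x. cmod (f t))"
      if "x \<in> PV" for f x
    proof (cases "i = j")
      case True
      then show ?thesis using comm_diag_bound[OF j that] B j by auto
    next
      case False
      have "(1 + 2 / a) / (real (lev x) + a) \<le> commutator_const B / (real (lev x) + a)"
        using commutator_const_ge[of B] a_pos by (intro divide_right_mono) auto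
      then show ?thesis
        using comm_offdiag_bound[OF i j False that, of f]
        by (meson mult_right_mono order_trans sum_nonneg norm_ge_zero)
    qed
    show "0 \<le> commutator_const B / (real n + a)" for n
    proof -
      have "0 \<le> commutator_const B" using a_pos by (simp add: commutator_const_def)
      then show ?thesis using a_pos by simp
    qed
    have "filterlim (\<lambda>n. a + real n) at_top sequentially"
      by (rule filterlim_tendsto_add_at_top[OF tendsto_const filterlim_real_sequentially])
    then show "(\<lambda>n. commutator_const B / (real n + a)) \<longlonglongrightarrow> 0"
      by (intro tendsto_divide_0[OF tendsto_const])
        (simp add: add.commute filterlim_at_top_imp_at_infinity)
  qed
qed

end

theorem mainTheorem19:
  fixes d :: nat and Vt :: "nat \<Rightarrow> 'a set" and ch :: "nat \<Rightarrow> 'a \<Rightarrow> 'a set" and a :: real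
  assumes "d \<ge> 1"
    and "\<forall>j<d. rooted_directed_tree (Vt j) (ch j)"
    and "\<forall>j<d. locally_finite_tree (Vt j) (ch j)"
    and "\<forall>j<d. leafless_tree (Vt j) (ch j)"
    and "a > 0"
    and "\<forall>j<d. branching_index (Vt j) (ch j) \<noteq> \<infinity>"
  shows "(\<forall>j<d. bounded_op (prod_V d Vt) (multishift d Vt ch (weight_Ca d Vt ch a) j)) \<and>
         (\<forall>i<d. \<forall>j<d. \<exists>Si_adj.
            is_adjoint (prod_V d Vt) (multishift d Vt ch (weight_Ca d Vt ch a) i) Si_adj \<and>
            compact_operator_ell2 (prod_V d Vt)
              (\<lambda>f x. Si_adj (multishift d Vt ch (weight_Ca d Vt ch a) j f) x
                     - multishift d Vt ch (weight_Ca d Vt ch a) j (Si_adj f) x))"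
proof -
  interpret tree_product d Vt ch a
    using assms(2-5) by unfold_locales (simp_all add: rooted_tree_def)
  have "bounded_op PV (multishift d Vt ch lam j)" if "j < d" for j
    unfolding multishift_eq_pshift[OF that]
    by (rule parent_shift.pshift_bounded[OF parent_shift_multishift[OF that]])
  moreover have "is_adjoint PV (multishift d Vt ch lam i) (S_adj i) \<and>
      compact_operator_ell2 PV (\<lambda>f x. S_adj i (multishift d Vt ch lam j f) x
                                    - multishift d Vt ch lam j (S_adj i f) x)"
    if "i < d" "j < d" for i j
    using parent_shift.pshift_adjoint[OF parent_shift_multishift[OF that(1)]]
      comm_compact[OF assms(6) that]
    unfolding multishift_eq_pshift[OF that(1)] multishift_eq_pshift[OF that(2)] comm_def
    by blast
  ultimately show ?thesis by blast
qed

end
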